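(* Consider the frameless ALOHA model with $n$ users and $m$ slots and its iterative (peeling) successive interference cancellation decoder, with state $S_u=(\mathtt{C}_u,\mathtt{R}_u)$ when $u$ users are unresolved, as described in the context. Let $1\le u\le n$ and suppose the decoder is in state $S_u=(c_u,r_u)$ with $r_u>0$. Then for integers $a_u,b_u$ with $0\le b_u\le c_u$, $a_u\ge 1$ and $a_u-b_u\le r_u$, $$\Pr\{S_{u-1}=(c_u-b_u,\; r_u-a_u+b_u)\mid S_u=(c_u,r_u)\} = \binom{c_u}{b_u} q_u^{\,b_u}(1-q_u)^{c_u-b_u}\binom{r_u-1}{a_u-1}\left(\frac1u\right)^{a_u-1}\left(1-\frac1u\right)^{r_u-a_u},$$ where $$q_u=\frac{\displaystyle\sum_{d=2}^{n-u+2}\Omega_d\, d(d-1)\,\frac1n\,\frac{u-1}{n-1}\,\frac{\binom{n-u}{d-2}}{\binom{n-2}{d-2}}}{\displaystyle 1-\sum_{d=1}^{n-u+1}\Omega_d\, u\,\frac{\binom{n-u}{d-1}}{\binom{n}{d}}-\sum_{d=0}^{n-u}\Omega_d\,\frac{\binom{n-u}{d}}{\binom{n}{d}}}.$$ Here $b_u$ is the number of slots that leave the cloud and enter the ripple in the transition from $u$ to $u-1$ unresolved users, and $a_u$ is the number of slots that leave the ripple in that transition; $q_u$ is the probability that a slot in the cloud when $u$ users are unresolved is in the ripple when $u-1$ users are unresolved.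
   Context: Frameless ALOHA model: there are $n$ users and $m$ slots. Each slot independently has a (original) degree $d\in\{0,1,\dots,n\}$ with probability $\Omega_d$ (the slot degree distribution; in the basic model each user transmits in each slot independently with probability $p=\beta/n$, so $\Omega_d=\binom{n}{d}p^d(1-p)^{n-d}$), and, given its degree $d$, the set of users transmitting in the slot (its neighbours) is a uniformly random $d$-subset of the $n$ users, chosen without replacement. This defines a bipartite graph between users and slots. Collision channel: a slot with exactly one (uncancelled) transmission is decodable, slots with two or more are not. Decoding (peeling / successive interference cancellation): initially all $n$ users are unresolved ($u=n$). The reduced degree of a slot is the number of its neighbours that are still unresolved. The ripple is the set of slots of reduced degree $1$, with cardinality $\mathtt{R}_u$ (value $r_u$) when $u$ users are unresolved; the cloud is the set of slots of reduced degree at least $2$, with cardinality $\mathtt{C}_u$ (value $c_u$). The decoder state is $S_u=(\mathtt{C}_u,\mathtt{R}_u)$. At each step, if the ripple is nonempty, the decoder picks a slot from the ripple uniformly at random, resolves its unique unresolved neighbour user, and removes all edges of that user from the graph (so $u$ decreases by $1$); if the ripple is empty, decoding stops (fails). Thus $c_{u-1}=c_u-b_u$ and $r_{u-1}=r_u-a_u+b_u$. *)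

theory Defs
  imports "HOL-Probability.Probability"
begin

(* Users are 0..<n, slots are 0..<m.  A bipartite graph is G :: nat => nat set,
   G j = set of users transmitting in slot j (for j < m). *)

definition slot_pmf :: "nat \<Rightarrow> nat pmf \<Rightarrow> nat set pmf" where
  "slot_pmf n \<Omega> = bind_pmf \<Omega> (\<lambda>d. pmf_of_set {S. S \<subseteq> {..<n} \<and> card S = d})"

definition graph_pmf :: "nat \<Rightarrow> nat \<Rightarrow> nat pmf \<Rightarrow> (nat \<Rightarrow> nat set) pmf" where
  "graph_pmf n m \<Omega> = Pi_pmf {..<m} {} (\<lambda>_. slot_pmf n \<Omega>)"

definition ripple :: "nat \<Rightarrow> (nat \<Rightarrow> nat set) \<Rightarrow> nat set \<Rightarrow> nat set" where
  "ripple m G U = {j. j < m \<and> card (G j \<inter> U) = 1}"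

definition cloud :: "nat \<Rightarrow> (nat \<Rightarrow> nat set) \<Rightarrow> nat set \<Rightarrow> nat set" where
  "cloud m G U = {j. j < m \<and> card (G j \<inter> U) \<ge> 2}"

definition dec_step :: "nat \<Rightarrow> (nat \<Rightarrow> nat set) \<times> nat set \<Rightarrow> ((nat \<Rightarrow> nat set) \<times> nat set) pmf" where
  "dec_step m s = (case s of (G, U) \<Rightarrow>
     (if ripple m G U = {} then return_pmf (G, U)
      else map_pmf (\<lambda>j. (G, U - {the_elem (G j \<inter> U)})) (pmf_of_set (ripple m G U))))"

fun dec_state :: "nat \<Rightarrow> nat \<Rightarrow> nat pmf \<Rightarrow> nat \<Rightarrow> ((nat \<Rightarrow> nat set) \<times> nat set) pmf" where
  "dec_state n m \<Omega> 0 = map_pmf (\<lambda>G. (G, {..<n})) (graph_pmf n m \<Omega>)"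
| "dec_state n m \<Omega> (Suc k) = bind_pmf (dec_state n m \<Omega> k) (dec_step m)"

definition dec_trans :: "nat \<Rightarrow> nat \<Rightarrow> nat pmf \<Rightarrow> nat \<Rightarrow>
    (((nat \<Rightarrow> nat set) \<times> nat set) \<times> ((nat \<Rightarrow> nat set) \<times> nat set)) pmf" where
  "dec_trans n m \<Omega> k = bind_pmf (dec_state n m \<Omega> k) (\<lambda>s. map_pmf (\<lambda>s'. (s, s')) (dec_step m s))"

definition in_state :: "nat \<Rightarrow> nat \<Rightarrow> nat \<Rightarrow> nat \<Rightarrow> (nat \<Rightarrow> nat set) \<times> nat set \<Rightarrow> bool" where
  "in_state m u c r s = (case s of (G, U) \<Rightarrow>
     card U = u \<and> card (cloud m G U) = c \<and> card (ripple m G U) = r)"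

definition q_u :: "nat \<Rightarrow> nat pmf \<Rightarrow> nat \<Rightarrow> real" where
  "q_u n \<Omega> u =
    (\<Sum>d = 2..n - u + 2. pmf \<Omega> d * real d * (real d - 1) * (1 / real n)
        * ((real u - 1) / (real n - 1))
        * (real ((n - u) choose (d - 2)) / real ((n - 2) choose (d - 2))))
    / (1 - (\<Sum>d = 1..n - u + 1. pmf \<Omega> d * real u
              * (real ((n - u) choose (d - 1)) / real (n choose d)))
         - (\<Sum>d = 0..n - u. pmf \<Omega> d * (real ((n - u) choose d) / real (n choose d))))"

end

theory Submission
  imports Defs
begin

section \<open>Finite computations with discrete distributions\<close>

lemma pmf_bind_finite_support:
  assumes "finite A" "set_pmf p \<subseteq> A"
  shows "pmf (bind_pmf p f) y = (\<Sum>x\<in>A. pmf p x * pmf (f x) y)"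
  unfolding pmf_bind using assms
  by (subst integral_measure_pmf_real[of A]) (auto simp: mult.commute)

lemma measure_pmf_finite_support:
  assumes "finite A" "set_pmf p \<subseteq> A"
  shows "measure_pmf.prob p E = (\<Sum>x\<in>A. pmf p x * indicator E x)"
proof -
  have "measure_pmf.prob p E = measure_pmf.prob p (A \<inter> E)"
    using assms by (intro measure_prob_cong_0) (auto simp: set_pmf_eq)
  also have "\<dots> = sum (pmf p) (A \<inter> E)"
    using assms by (simp add: measure_measure_pmf_finite)
  also have "\<dots> = (\<Sum>x\<in>A. pmf p x * indicator E x)"
    using assms by (simp add: sum.inter_restrict indicator_def if_distrib cong: if_cong)
  finally show ?thesis .
qed

lemma measure_bind_pmf_finite_support:
  assumes "finite A" "set_pmf p \<subseteq> A"
  shows "measure_pmf.prob (bind_pmf p f) E = (\<Sum>x\<in>A. pmf p x * measure_pmf.prob (f x) E)"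
proof -
  have "ennreal (measure_pmf.prob (bind_pmf p f) E) = (\<integral>\<^sup>+x. emeasure (f x) E \<partial>measure_pmf p)"
    by (simp add: measure_pmf.emeasure_eq_measure[symmetric])
  also have "\<dots> = (\<Sum>x\<in>A. emeasure (f x) E * pmf p x)"
    using assms by (intro nn_integral_measure_pmf_support) (auto simp: set_pmf_eq)
  also have "\<dots> = (\<Sum>x\<in>A. ennreal (pmf p x * measure_pmf.prob (f x) E))"
    by (simp add: measure_pmf.emeasure_eq_measure ennreal_mult' mult.commute)
  also have "\<dots> = ennreal (\<Sum>x\<in>A. pmf p x * measure_pmf.prob (f x) E)"
    by (rule sum_ennreal) auto
  finally show ?thesis
    by (subst (asm) ennreal_inj) (auto intro!: sum_nonneg)
qed

lemma measure_pair_pmf_finite_support: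
  assumes "finite A" "set_pmf p \<subseteq> A"
  shows "measure_pmf.prob (pair_pmf p q) E = (\<Sum>x\<in>A. pmf p x * measure_pmf.prob q {y. (x, y) \<in> E})"
proof -
  have "pair_pmf p q = bind_pmf p (\<lambda>x. map_pmf (Pair x) q)"
    by (simp add: pair_pmf_def map_pmf_def)
  then show ?thesis
    by (simp add: measure_bind_pmf_finite_support[OF assms] vimage_def)
qed

lemma measure_pair_pmf_const_sections:
  assumes "finite (set_pmf p)"
    and "\<And>x. x \<in> set_pmf p \<Longrightarrow> measure_pmf.prob q {y. (x, y) \<in> E} = (if P x then c else 0)"
  shows "measure_pmf.prob (pair_pmf p q) E = c * measure_pmf.prob p {x. P x}"
proof -
  have "measure_pmf.prob (pair_pmf p q) E = (\<Sum>x\<in>set_pmf p. c * (pmf p x * indicator {x. P x} x))"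
    using assms by (subst measure_pair_pmf_finite_support[of "set_pmf p"]) (auto intro!: sum.cong)
  also have "\<dots> = c * measure_pmf.prob p {x. P x}"
    using assms by (simp add: sum_distrib_left[symmetric] measure_pmf_finite_support[of "set_pmf p"])
  finally show ?thesis .
qed

lemma measure_cond_pmf_finite_support:
  assumes "finite A" "set_pmf p \<subseteq> A" "set_pmf p \<inter> s \<noteq> {}"
  shows "measure_pmf.prob (cond_pmf p s) E = measure_pmf.prob p (E \<inter> s) / measure_pmf.prob p s"
proof -
  have "set_pmf (cond_pmf p s) \<subseteq> A"
    using assms by (simp add: set_cond_pmf) blast
  with assms(1) have "measure_pmf.prob (cond_pmf p s) E = (\<Sum>x\<in>A. pmf (cond_pmf p s) x * indicator E x)"
    by (rule measure_pmf_finite_support)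
  also have "\<dots> = (\<Sum>x\<in>A. pmf p x * indicator (E \<inter> s) x) / measure_pmf.prob p s"
    by (simp add: pmf_cond[OF assms(3)] sum_divide_distrib indicator_def) (intro sum.cong refl, auto)
  finally show ?thesis
    by (simp add: measure_pmf_finite_support[OF assms(1,2)])
qed

lemma cond_pmf_eq_pmf_of_set:
  assumes "finite K" "set_pmf p \<inter> K \<noteq> {}" "\<And>x. x \<in> K \<Longrightarrow> pmf p x = w"
  shows "cond_pmf p K = pmf_of_set K"
proof (rule pmf_eqI)
  fix x
  have "measure_pmf.prob p K = real (card K) * w"
    using assms by (simp add: measure_measure_pmf_finite)
  moreover have "w \<noteq> 0" "K \<noteq> {}"
    using assms by (auto simp: set_pmf_eq)
  ultimately show "pmf (cond_pmf p K) x = pmf (pmf_of_set K) x"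
    using assms by (auto simp: pmf_cond indicator_def)
qed

lemma bind_cond_pmf_fibres: "bind_pmf (map_pmf f p) (\<lambda>y. cond_pmf p {x. f x = y}) = p"
proof -
  have "bind_pmf (map_pmf f p) (\<lambda>y. cond_pmf p {x. (\<lambda>y x. f x = y) y x}) = p"
    by (rule bind_cond_pmf_cancel) (auto simp: vimage_def)
  then show ?thesis by simp
qed

lemma map_pmf_eq_bernoulli_pmf: "map_pmf P p = bernoulli_pmf (measure_pmf.prob p {x. P x})"
proof (rule pmf_eqI)
  fix b :: bool
  have "P -` {False} = space (measure_pmf p) - {x. P x}" by auto
  then have "measure_pmf.prob p (P -` {False}) = 1 - measure_pmf.prob p {x. P x}"
    by (simp only: measure_pmf.prob_compl sets_measure_pmf UNIV_I)
  moreover have "P -` {True} = {x. P x}" by auto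
  ultimately show "pmf (map_pmf P p) b = pmf (bernoulli_pmf (measure_pmf.prob p {x. P x})) b"
    by (cases b) (simp_all add: pmf_map)
qed

lemma map_Pi_pmf_card_eq_binomial_pmf:
  assumes "finite I"
  shows "map_pmf (\<lambda>f. card {i\<in>I. P (f i)}) (Pi_pmf I d (\<lambda>_. p)) =
         binomial_pmf (card I) (measure_pmf.prob p {x. P x})"
proof -
  let ?t = "measure_pmf.prob p {x. P x}"
  have "Pi_pmf I (P d) (\<lambda>_. bernoulli_pmf ?t) = map_pmf (\<lambda>h. P \<circ> h) (Pi_pmf I d (\<lambda>_. p))"
    using Pi_pmf_map[OF assms, of P d _ "\<lambda>_. p"] by (simp add: map_pmf_eq_bernoulli_pmf)
  moreover have "binomial_pmf (card I) ?t =
      map_pmf (\<lambda>f. card {x\<in>I. f x}) (Pi_pmf I (P d) (\<lambda>_. bernoulli_pmf ?t))"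
    by (rule binomial_pmf_altdef'[OF assms refl]) auto
  ultimately show ?thesis by (simp add: map_pmf_comp o_def)
qed

lemma measure_Pi_pmf_card_eq:
  assumes "finite I"
  shows "measure_pmf.prob (Pi_pmf I d (\<lambda>_. p)) {f. card {i\<in>I. P (f i)} = k} =
     real (card I choose k) * measure_pmf.prob p {x. P x} ^ k
       * (1 - measure_pmf.prob p {x. P x}) ^ (card I - k)"
proof -
  have "measure_pmf.prob (Pi_pmf I d (\<lambda>_. p)) {f. card {i\<in>I. P (f i)} = k} =
      pmf (map_pmf (\<lambda>f. card {i\<in>I. P (f i)}) (Pi_pmf I d (\<lambda>_. p))) k"
    by (simp add: pmf_map vimage_def)
  then show ?thesis
    by (simp add: map_Pi_pmf_card_eq_binomial_pmf[OF assms] pmf_binomial)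
qed

lemma map_Pi_pmf_restrict_disjoint:
  assumes "finite A" "R \<subseteq> A" "C \<subseteq> A" "R \<inter> C = {}"
  shows "map_pmf (\<lambda>f. (\<lambda>i. if i \<in> R then f i else d, \<lambda>i. if i \<in> C then f i else d)) (Pi_pmf A d p) =
         pair_pmf (Pi_pmf R d p) (Pi_pmf C d p)"
proof -
  let ?split = "\<lambda>f. (\<lambda>i. if i \<in> R then f i else d, \<lambda>i. if i \<in> C then f i else d)"
  let ?merge = "\<lambda>(f, g) x. if x \<in> R then f x else g x"
  have fin: "finite R" "finite C" using assms finite_subset by blast+
  have "map_pmf ?split (Pi_pmf A d p) = map_pmf ?split (Pi_pmf (R \<union> C) d p)"
    using assms by (subst Pi_pmf_subset[of A]) (auto simp: map_pmf_comp fun_eq_iff intro!: map_pmf_cong)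
  also have "\<dots> = map_pmf (\<lambda>z. ?split (?merge z)) (pair_pmf (Pi_pmf R d p) (Pi_pmf C d p))"
    by (simp only: Pi_pmf_union[OF fin assms(4)] map_pmf_comp)
  also have "\<dots> = map_pmf id (pair_pmf (Pi_pmf R d p) (Pi_pmf C d p))"
    using set_Pi_pmf_subset[OF fin(1), of d p] set_Pi_pmf_subset[OF fin(2), of d p] assms(4)
    by (intro map_pmf_cong refl) (fastforce simp: fun_eq_iff)
  finally show ?thesis by simp
qed

text \<open>For i.i.d.\ uniform labels on the index set \<open>R\<close>, the number of indices sharing the label
  of a fixed index \<open>j\<close> is \<open>1\<close> plus a binomial variable on the remaining \<open>card R - 1\<close> indices.\<close>

lemma measure_Pi_pmf_of_set_card_same:
  assumes "finite R" "j \<in> R" "finite U" "U \<noteq> {}" "1 \<le> a"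
  shows "measure_pmf.prob (Pi_pmf R d (\<lambda>_. pmf_of_set U)) {f. card {i\<in>R. f i = f j} = a} =
     real ((card R - 1) choose (a - 1)) * (1 / real (card U)) ^ (a - 1)
       * (1 - 1 / real (card U)) ^ (card R - a)"
proof -
  define R' where "R' = R - {j}"
  have R: "R = insert j R'" "j \<notin> R'" "finite R'" "card R' = card R - 1"
    using assms by (auto simp: R'_def)
  let ?u = "pmf_of_set U"
  let ?E = "{f. card {i\<in>R. f i = f j} = a}"
  let ?bin = "real ((card R - 1) choose (a - 1)) * (1 / real (card U)) ^ (a - 1)
       * (1 - 1 / real (card U)) ^ (card R - a)"
  have fibre: "measure_pmf.prob (Pi_pmf R' d (\<lambda>_. ?u)) {f. (x, f) \<in> (\<lambda>(y, f). f(j := y)) -` ?E} = ?bin"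
    if "x \<in> U" for x
  proof -
    have "{i\<in>R. (f(j := x)) i = (f(j := x)) j} = insert j {i\<in>R'. f i = x}" for f
      using R by auto
    then have "{f. (x, f) \<in> (\<lambda>(y, f). f(j := y)) -` ?E} = {f. card {i\<in>R'. f i = x} = a - 1}"
      using R assms(5) by auto
    moreover have "measure_pmf.prob ?u {y. y = x} = 1 / real (card U)"
      using that assms by (simp add: measure_pmf_of_set)
    ultimately show ?thesis
      using measure_Pi_pmf_card_eq[OF R(3), of d ?u "\<lambda>y. y = x" "a - 1"] R(4) assms(5) by simp
  qed
  have "measure_pmf.prob (Pi_pmf R d (\<lambda>_. ?u)) ?E =
      measure_pmf.prob (pair_pmf ?u (Pi_pmf R' d (\<lambda>_. ?u))) ((\<lambda>(y, f). f(j := y)) -` ?E)"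
    unfolding R(1) Pi_pmf_insert[OF R(3) R(2)] by simp
  also have "\<dots> = (\<Sum>x\<in>U. pmf ?u x *
      measure_pmf.prob (Pi_pmf R' d (\<lambda>_. ?u)) {f. (x, f) \<in> (\<lambda>(y, f). f(j := y)) -` ?E})"
    by (rule measure_pair_pmf_finite_support) (use assms in auto)
  also have "\<dots> = (\<Sum>x\<in>U. pmf ?u x * ?bin)"
    by (intro sum.cong refl) (simp only: fibre)
  also have "\<dots> = ?bin"
    using assms by (simp add: sum_distrib_right[symmetric] sum_pmf_eq_1)
  finally show ?thesis .
qed

section \<open>Counting subsets\<close>

lemma card_subsets_Int_disjoint:
  assumes "finite X" "finite Y" "X \<inter> Y = {}"
  shows "card {S. S \<subseteq> X \<union> Y \<and> card (S \<inter> X) = i \<and> card (S \<inter> Y) = j} =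
         (card X choose i) * (card Y choose j)"
proof -
  let ?PX = "{A. A \<subseteq> X \<and> card A = i}" and ?PY = "{B. B \<subseteq> Y \<and> card B = j}"
  have eq: "{S. S \<subseteq> X \<union> Y \<and> card (S \<inter> X) = i \<and> card (S \<inter> Y) = j} = (\<lambda>(A, B). A \<union> B) ` (?PX \<times> ?PY)"
  proof (intro equalityI subsetI)
    fix S assume "S \<in> {S. S \<subseteq> X \<union> Y \<and> card (S \<inter> X) = i \<and> card (S \<inter> Y) = j}"
    then show "S \<in> (\<lambda>(A, B). A \<union> B) ` (?PX \<times> ?PY)"
      by (intro image_eqI[of _ _ "(S \<inter> X, S \<inter> Y)"]) auto
  next
    fix S assume "S \<in> (\<lambda>(A, B). A \<union> B) ` (?PX \<times> ?PY)"
    then obtain A B where "S = A \<union> B" "A \<in> ?PX" "B \<in> ?PY" by auto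
    moreover have "S \<inter> X = A" "S \<inter> Y = B" using calculation assms(3) by auto
    ultimately show "S \<in> {S. S \<subseteq> X \<union> Y \<and> card (S \<inter> X) = i \<and> card (S \<inter> Y) = j}" by auto
  qed
  have inj: "inj_on (\<lambda>(A, B). A \<union> B) (?PX \<times> ?PY)"
  proof (rule inj_onI, clarify)
    fix A B A' B' assume "A \<subseteq> X" "B \<subseteq> Y" "A' \<subseteq> X" "B' \<subseteq> Y" "A \<union> B = A' \<union> B'"
    then show "A = A' \<and> B = B'" using assms(3) by blast
  qed
  show ?thesis
    unfolding eq card_image[OF inj] card_cartesian_product
    using n_subsets[OF assms(1), of i] n_subsets[OF assms(2), of j] by simp
qed

lemma card_subsets_Int_eq:
  assumes finite_N: "finite N" and U_subset: "U \<subseteq> N" and "i \<le> d"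
  shows "card ({S. card (S \<inter> U) = i} \<inter> {S. S \<subseteq> N \<and> card S = d}) =
    (card U choose i) * ((card N - card U) choose (d - i))"
proof -
  have card_split: "card S = card (S \<inter> U) + card (S \<inter> (N - U))" if "S \<subseteq> N" for S
  proof -
    have "S = (S \<inter> U) \<union> (S \<inter> (N - U))" using that by auto
    also have "card \<dots> = card (S \<inter> U) + card (S \<inter> (N - U))"
      using finite_subset[OF that finite_N] by (intro card_Un_disjoint) auto
    finally show ?thesis .
  qed
  have "{S. card (S \<inter> U) = i} \<inter> {S. S \<subseteq> N \<and> card S = d} =
        {S. S \<subseteq> U \<union> (N - U) \<and> card (S \<inter> U) = i \<and> card (S \<inter> (N - U)) = d - i}"
  proof (intro equalityI subsetI)
    fix S assume "S \<in> {S. card (S \<inter> U) = i} \<inter> {S. S \<subseteq> N \<and> card S = d}"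
    with card_split[of S] U_subset show "S \<in> {S. S \<subseteq> U \<union> (N - U) \<and> card (S \<inter> U) = i \<and> card (S \<inter> (N - U)) = d - i}"
      by auto
  next
    fix S assume S: "S \<in> {S. S \<subseteq> U \<union> (N - U) \<and> card (S \<inter> U) = i \<and> card (S \<inter> (N - U)) = d - i}"
    then have "S \<subseteq> N" using U_subset by auto
    with card_split[of S] S assms(3) show "S \<in> {S. card (S \<inter> U) = i} \<inter> {S. S \<subseteq> N \<and> card S = d}"
      by auto
  qed
  also have "card \<dots> = (card U choose i) * (card (N - U) choose (d - i))"
    using finite_N U_subset by (intro card_subsets_Int_disjoint) (auto simp: finite_subset)
  finally show ?thesis
    using finite_N U_subset by (simp add: card_Diff_subset finite_subset)
qed

lemma card_subsets_Int_eq_1: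
  assumes finite_N: "finite N" and U_subset: "U \<subseteq> N"
  shows "card ({S. card (S \<inter> U) = 1} \<inter> {S. S \<subseteq> N \<and> card S = d}) =
    (if 1 \<le> d then card U * ((card N - card U) choose (d - 1)) else 0)"
proof (cases "1 \<le> d")
  case False
  have "{S. card (S \<inter> U) = 1} \<inter> {S. S \<subseteq> N \<and> card S = d} = {}"
  proof (rule equals0I)
    fix S assume "S \<in> {S. card (S \<inter> U) = 1} \<inter> {S. S \<subseteq> N \<and> card S = d}"
    moreover from this have "finite S" using finite_N finite_subset by blast
    ultimately have "S = {}" using False by (simp add: not_less_eq_eq)
    with \<open>S \<in> _\<close> show False by simp
  qed
  with False show ?thesis by simp
qed (simp add: card_subsets_Int_eq[OF assms])

lemma subsets_Int_eq_2_mem_eq_image: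
  assumes finite_N: "finite N" and U_subset: "U \<subseteq> N" and x: "x \<in> U" and "2 \<le> d"
  shows "{S. card (S \<inter> U) = 2 \<and> x \<in> S} \<inter> {S. S \<subseteq> N \<and> card S = d} =
    insert x ` ({T. card (T \<inter> (U - {x})) = 1} \<inter> {T. T \<subseteq> N - {x} \<and> card T = d - 1})"
    (is "?L = insert x ` ?M")
proof (intro equalityI subsetI)
  fix S assume "S \<in> ?L"
  then have S: "S \<subseteq> N" "card S = d" "card (S \<inter> U) = 2" "x \<in> S" "finite S"
    using finite_N finite_subset by auto
  have "(S - {x}) \<inter> (U - {x}) = (S \<inter> U) - {x}" by auto
  then have "card ((S - {x}) \<inter> (U - {x})) = 1"
    using S x by simp
  moreover have "S - {x} \<subseteq> N - {x}" "card (S - {x}) = d - 1"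
    using S by auto
  ultimately have "S - {x} \<in> ?M" by simp
  moreover have "S = insert x (S - {x})" using S by auto
  ultimately show "S \<in> insert x ` ?M" by blast
next
  fix S assume "S \<in> insert x ` ?M"
  then obtain T where T: "S = insert x T" "T \<subseteq> N - {x}" "card T = d - 1" "card (T \<inter> (U - {x})) = 1"
    by auto
  from T(2) have "T \<subseteq> N" by auto
  then have "finite T" using finite_N by (rule finite_subset)
  moreover have "x \<notin> T" using T(2) by auto
  moreover have "S \<inter> U = insert x (T \<inter> (U - {x}))" using T(1) x by auto
  ultimately have "card (S \<inter> U) = 2" "card S = d"
    using T assms(4) by auto
  moreover have "S \<subseteq> N" using T x U_subset by auto
  ultimately show "S \<in> ?L"
    using T(1) by auto
qed

lemma card_subsets_Int_eq_2_mem: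
  assumes finite_N: "finite N" and U_subset: "U \<subseteq> N" and x: "x \<in> U"
  shows "card ({S. card (S \<inter> U) = 2 \<and> x \<in> S} \<inter> {S. S \<subseteq> N \<and> card S = d}) =
    (if 2 \<le> d then (card U - 1) * ((card N - card U) choose (d - 2)) else 0)"
proof (cases "2 \<le> d")
  case True
  let ?M = "{T. card (T \<inter> (U - {x})) = 1} \<inter> {T. T \<subseteq> N - {x} \<and> card T = d - 1}"
  have "inj_on (insert x) ?M"
  proof (rule inj_onI)
    fix A B assume "A \<in> ?M" "B \<in> ?M" "insert x A = insert x B"
    moreover from this have "x \<notin> A" "x \<notin> B" by auto
    ultimately show "A = B" by (metis insert_ident)
  qed
  moreover have "card ?M = (card U - 1) * ((card N - card U) choose (d - 2))"
  proof -
    have "card ?M = (card (U - {x}) choose 1) * ((card (N - {x}) - card (U - {x})) choose (d - 1 - 1))"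
      using finite_N U_subset True by (intro card_subsets_Int_eq) auto
    moreover have "finite U" "x \<in> N" using finite_N U_subset x finite_subset by auto
    then have "card (N - {x}) = card N - 1" "card (U - {x}) = card U - 1" "1 \<le> card U"
      using finite_N x by (auto simp: Suc_le_eq card_gt_0_iff)
    ultimately show ?thesis
      using card_mono[OF finite_N U_subset] by (simp add: numeral_2_eq_2)
  qed
  ultimately show ?thesis
    using True by (simp add: subsets_Int_eq_2_mem_eq_image[OF assms True] card_image)
next
  case False
  have "{S. card (S \<inter> U) = 2 \<and> x \<in> S} \<inter> {S. S \<subseteq> N \<and> card S = d} = {}"
  proof (rule equals0I)
    fix S assume S: "S \<in> {S. card (S \<inter> U) = 2 \<and> x \<in> S} \<inter> {S. S \<subseteq> N \<and> card S = d}"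
    then have "finite S" using finite_N finite_subset by blast
    then have "card (S \<inter> U) \<le> card S" by (intro card_mono) auto
    with S False show False by simp
  qed
  with False show ?thesis by simp
qed

lemma binomial_absorption_twice:
  assumes "2 \<le> d" "d \<le> n"
  shows "(n choose d) * d * (d - 1) = n * (n - 1) * ((n - 2) choose (d - 2))"
proof -
  obtain k where k: "d = Suc (Suc k)" using assms(1) by (metis add_2_eq_Suc le_Suc_ex)
  have "(n choose d) * d * (d - 1) = (Suc (Suc k) * (n choose Suc (Suc k))) * Suc k"
    using k by (simp add: mult.commute mult.left_commute)
  also have "\<dots> = n * (Suc k * ((n - 1) choose Suc k))"
    using binomial_absorption[of "Suc k" n] by (simp add: mult.commute mult.left_commute)
  also have "\<dots> = n * ((n - 1) * ((n - 2) choose k))"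
    using binomial_absorption[of k "n - 1"] by (simp add: diff_diff_left numeral_2_eq_2)
  finally show ?thesis using k by (simp add: mult.assoc)
qed

lemma q_u_numerator_summand:
  fixes w :: real
  assumes "2 \<le> d" "d \<le> n" "1 \<le> u"
  shows "w * real ((u - 1) * ((n - u) choose (d - 2))) / real (n choose d) =
    w * real d * (real d - 1) * (1 / real n) * ((real u - 1) / (real n - 1))
      * (real ((n - u) choose (d - 2)) / real ((n - 2) choose (d - 2)))"
proof -
  define A where "A = real (n choose d)"
  define B where "B = real ((n - 2) choose (d - 2))"
  define K where "K = real ((n - u) choose (d - 2))"
  have "real ((n choose d) * d * (d - 1)) = real (n * (n - 1) * ((n - 2) choose (d - 2)))"
    using binomial_absorption_twice[OF assms(1,2)] by (simp only:)
  then have absorb: "real n * (real n - 1) * B = A * real d * (real d - 1)"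
    using assms by (simp add: of_nat_diff A_def B_def)
  have nonzero: "A \<noteq> 0" "B \<noteq> 0" "real n \<noteq> 0" "real n - 1 \<noteq> 0" "real d \<noteq> 0" "real d - 1 \<noteq> 0"
    using assms by (auto simp: A_def B_def)
  have "w * real d * (real d - 1) * (1 / real n) * ((real u - 1) / (real n - 1)) * (K / B) =
      w * (real u - 1) * K * (real d * (real d - 1)) / (real n * (real n - 1) * B)"
    using nonzero by (simp add: field_simps)
  also have "\<dots> = w * (real u - 1) * K / A"
    unfolding absorb using nonzero by (simp add: field_simps)
  finally show ?thesis
    using assms(3) by (simp add: of_nat_diff A_def B_def K_def)
qed

section \<open>The slot distribution\<close>

lemma set_slot_pmf:
  assumes "set_pmf \<Omega> \<subseteq> {..n}"
  shows "set_pmf (slot_pmf n \<Omega>) \<subseteq> Pow {..<n}"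
proof
  fix S assume "S \<in> set_pmf (slot_pmf n \<Omega>)"
  then obtain d where d: "d \<in> set_pmf \<Omega>"
    and S: "S \<in> set_pmf (pmf_of_set {S. S \<subseteq> {..<n} \<and> card S = d})"
    unfolding slot_pmf_def by auto
  have "finite {S. S \<subseteq> {..<n} \<and> card S = d}"
    by (rule finite_subset[of _ "Pow {..<n}"]) auto
  moreover have "{S. S \<subseteq> {..<n} \<and> card S = d} \<noteq> {}"
    using d assms by (auto intro!: exI[of _ "{..<d}"])
  ultimately show "S \<in> Pow {..<n}" using S by auto
qed

lemma measure_slot_pmf:
  assumes "set_pmf \<Omega> \<subseteq> {..n}"
  shows "measure_pmf.prob (slot_pmf n \<Omega>) E =
    (\<Sum>d\<in>{..n}. pmf \<Omega> d * real (card (E \<inter> {S. S \<subseteq> {..<n} \<and> card S = d})) / real (n choose d))"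
proof -
  have "measure_pmf.prob (pmf_of_set {S. S \<subseteq> {..<n} \<and> card S = d}) E =
      real (card (E \<inter> {S. S \<subseteq> {..<n} \<and> card S = d})) / real (n choose d)" if "d \<le> n" for d
  proof -
    have "finite {S. S \<subseteq> {..<n} \<and> card S = d}"
      by (rule finite_subset[of _ "Pow {..<n}"]) auto
    moreover have "{S. S \<subseteq> {..<n} \<and> card S = d} \<noteq> {}"
      using that by (auto intro!: exI[of _ "{..<d}"])
    ultimately show ?thesis
      using n_subsets[of "{..<n}" d] by (simp add: measure_pmf_of_set Int_commute)
  qed
  then show ?thesis
    unfolding slot_pmf_def using assms
    by (subst measure_bind_pmf_finite_support[of "{..n}"]) auto
qed

lemma pmf_slot_pmf:
  assumes "set_pmf \<Omega> \<subseteq> {..n}" "S \<subseteq> {..<n}"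
  shows "pmf (slot_pmf n \<Omega>) S = pmf \<Omega> (card S) / real (n choose card S)"
proof -
  have "card S \<le> n" using card_mono[OF _ assms(2)] by simp
  have "pmf (slot_pmf n \<Omega>) S = measure_pmf.prob (slot_pmf n \<Omega>) {S}"
    by (simp add: measure_pmf_single)
  also have "\<dots> = (\<Sum>d\<in>{..n}. if d = card S then pmf \<Omega> d / real (n choose d) else 0)"
  proof -
    have "{S} \<inter> {T. T \<subseteq> {..<n} \<and> card T = d} = (if d = card S then {S} else {})" for d
      using assms(2) by auto
    then show ?thesis
      unfolding measure_slot_pmf[OF assms(1)] by (intro sum.cong) auto
  qed
  finally show ?thesis using \<open>card S \<le> n\<close> by simp
qed

definition graphs :: "nat \<Rightarrow> nat \<Rightarrow> (nat \<Rightarrow> nat set) set" where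
  "graphs n m = PiE_dflt {..<m} {} (\<lambda>_. Pow {..<n})"

lemma set_graph_pmf:
  assumes "set_pmf \<Omega> \<subseteq> {..n}"
  shows "set_pmf (graph_pmf n m \<Omega>) \<subseteq> graphs n m"
  unfolding graph_pmf_def graphs_def using set_slot_pmf[OF assms] by (auto simp: set_Pi_pmf PiE_dflt_def)

lemma finite_graphs: "finite (graphs n m)"
  unfolding graphs_def by (intro finite_PiE_dflt) auto

text \<open>The denominator of \<open>q_u\<close> is the probability that a slot is in the cloud, its numerator
  the probability that the slot joins the ripple when a given unresolved user \<open>x\<close> is resolved.\<close>

context
  fixes n u :: nat and U :: "nat set" and \<Omega> :: "nat pmf"
  assumes U: "U \<subseteq> {..<n}" "card U = u" and u_pos: "1 \<le> u" and deg: "set_pmf \<Omega> \<subseteq> {..n}"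
begin

lemma u_le_n: "u \<le> n"
  using U card_mono[of "{..<n}" U] by auto

lemma prob_slot_joins_ripple:
  assumes "x \<in> U"
  shows "measure_pmf.prob (slot_pmf n \<Omega>) {S. card (S \<inter> U) = 2 \<and> x \<in> S} =
    (\<Sum>d = 2..n - u + 2. pmf \<Omega> d * real d * (real d - 1) * (1 / real n)
        * ((real u - 1) / (real n - 1))
        * (real ((n - u) choose (d - 2)) / real ((n - 2) choose (d - 2))))"
proof -
  let ?f = "\<lambda>d. pmf \<Omega> d * real d * (real d - 1) * (1 / real n) * ((real u - 1) / (real n - 1))
        * (real ((n - u) choose (d - 2)) / real ((n - 2) choose (d - 2)))"
  have "measure_pmf.prob (slot_pmf n \<Omega>) {S. card (S \<inter> U) = 2 \<and> x \<in> S} =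
     (\<Sum>d\<in>{..n}. pmf \<Omega> d * real (if 2 \<le> d then (u - 1) * ((n - u) choose (d - 2)) else 0) / real (n choose d))"
    by (simp only: measure_slot_pmf[OF deg] card_subsets_Int_eq_2_mem[OF finite_lessThan U(1) assms] card_lessThan U(2))
  also have "\<dots> = (\<Sum>d\<in>{2..n}. ?f d)"
    using q_u_numerator_summand u_pos by (intro sum.mono_neutral_cong_right) auto
  also have "\<dots> = (\<Sum>d = 2..n - u + 2. ?f d)"
  proof (cases "u = 1")
    case True
    then show ?thesis by simp
  next
    case False
    with u_le_n u_pos show ?thesis by (intro sum.mono_neutral_right) auto
  qed
  finally show ?thesis .
qed

lemma prob_slot_Int_eq_1:
  "measure_pmf.prob (slot_pmf n \<Omega>) {S. card (S \<inter> U) = 1} =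
    (\<Sum>d = 1..n - u + 1. pmf \<Omega> d * real u * (real ((n - u) choose (d - 1)) / real (n choose d)))"
proof -
  have "measure_pmf.prob (slot_pmf n \<Omega>) {S. card (S \<inter> U) = 1} =
      (\<Sum>d\<in>{..n}. pmf \<Omega> d * real (if 1 \<le> d then u * ((n - u) choose (d - 1)) else 0) / real (n choose d))"
    by (simp only: measure_slot_pmf[OF deg] card_subsets_Int_eq_1[OF finite_lessThan U(1)] card_lessThan U(2))
  also have "\<dots> = (\<Sum>d\<in>{1..n}. pmf \<Omega> d * real u * (real ((n - u) choose (d - 1)) / real (n choose d)))"
    by (intro sum.mono_neutral_cong_right) auto
  also have "\<dots> = (\<Sum>d = 1..n - u + 1. pmf \<Omega> d * real u * (real ((n - u) choose (d - 1)) / real (n choose d)))"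
    using u_pos u_le_n by (intro sum.mono_neutral_right) auto
  finally show ?thesis .
qed

lemma prob_slot_Int_eq_0:
  "measure_pmf.prob (slot_pmf n \<Omega>) {S. card (S \<inter> U) = 0} =
    (\<Sum>d = 0..n - u. pmf \<Omega> d * (real ((n - u) choose d) / real (n choose d)))"
proof -
  have "measure_pmf.prob (slot_pmf n \<Omega>) {S. card (S \<inter> U) = 0} =
      (\<Sum>d\<in>{..n}. pmf \<Omega> d * real ((n - u) choose d) / real (n choose d))"
    using card_subsets_Int_eq[OF finite_lessThan U(1), of 0] U(2) by (simp add: measure_slot_pmf[OF deg])
  also have "\<dots> = (\<Sum>d = 0..n - u. pmf \<Omega> d * (real ((n - u) choose d) / real (n choose d)))"
    by (intro sum.mono_neutral_cong_right) auto
  finally show ?thesis .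
qed

lemma prob_slot_in_cloud:
  "measure_pmf.prob (slot_pmf n \<Omega>) {S. 2 \<le> card (S \<inter> U)} =
    1 - (\<Sum>d = 1..n - u + 1. pmf \<Omega> d * real u * (real ((n - u) choose (d - 1)) / real (n choose d)))
      - (\<Sum>d = 0..n - u. pmf \<Omega> d * (real ((n - u) choose d) / real (n choose d)))"
proof -
  let ?p = "slot_pmf n \<Omega>"
  have "{S. 2 \<le> card (S \<inter> U)} = space (measure_pmf ?p) - ({S. card (S \<inter> U) = 1} \<union> {S. card (S \<inter> U) = 0})"
    by auto
  then have "measure_pmf.prob ?p {S. 2 \<le> card (S \<inter> U)} =
      1 - measure_pmf.prob ?p ({S. card (S \<inter> U) = 1} \<union> {S. card (S \<inter> U) = 0})"
    by (simp only: measure_pmf.prob_compl sets_measure_pmf UNIV_I)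
  also have "measure_pmf.prob ?p ({S. card (S \<inter> U) = 1} \<union> {S. card (S \<inter> U) = 0}) =
      measure_pmf.prob ?p {S. card (S \<inter> U) = 1} + measure_pmf.prob ?p {S. card (S \<inter> U) = 0}"
    by (rule measure_pmf.finite_measure_Union) auto
  finally show ?thesis
    unfolding prob_slot_Int_eq_1 prob_slot_Int_eq_0 by simp
qed

lemma prob_cond_cloud_slot_joins_ripple:
  assumes "x \<in> U" "set_pmf (slot_pmf n \<Omega>) \<inter> {S. 2 \<le> card (S \<inter> U)} \<noteq> {}"
  shows "measure_pmf.prob (cond_pmf (slot_pmf n \<Omega>) {S. 2 \<le> card (S \<inter> U)})
      {S. card (S \<inter> U) = 2 \<and> x \<in> S} = q_u n \<Omega> u"
proof -
  have "{S. card (S \<inter> U) = 2 \<and> x \<in> S} \<inter> {S. 2 \<le> card (S \<inter> U)} = {S. card (S \<inter> U) = 2 \<and> x \<in> S}"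
    by auto
  then show ?thesis
    using assms(2) set_slot_pmf[OF deg]
    by (simp add: measure_cond_pmf_finite_support[of "Pow {..<n}"] q_u_def
        prob_slot_joins_ripple[OF assms(1)] prob_slot_in_cloud)
qed

end

definition trans_prob :: "nat \<Rightarrow> nat pmf \<Rightarrow> nat \<Rightarrow> nat \<Rightarrow> nat \<Rightarrow> nat \<Rightarrow> nat \<Rightarrow> real" where
  "trans_prob n \<Omega> u c r a b = real (c choose b) * q_u n \<Omega> u ^ b * (1 - q_u n \<Omega> u) ^ (c - b)
     * real ((r - 1) choose (a - 1)) * (1 / real u) ^ (a - 1) * (1 - 1 / real u) ^ (r - a)"

section \<open>Peeling with the graph fixed\<close>

text \<open>Given the graph, the decoder only changes the set of unresolved users; \<open>peel n m G k\<close> is its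
  distribution after \<open>k\<close> steps.\<close>

definition peel_step :: "nat \<Rightarrow> (nat \<Rightarrow> nat set) \<Rightarrow> nat set \<Rightarrow> nat set pmf" where
  "peel_step m G V = (if ripple m G V = {} then return_pmf V
      else map_pmf (\<lambda>j. V - {the_elem (G j \<inter> V)}) (pmf_of_set (ripple m G V)))"

fun peel :: "nat \<Rightarrow> nat \<Rightarrow> (nat \<Rightarrow> nat set) \<Rightarrow> nat \<Rightarrow> nat set pmf" where
  "peel n m G 0 = return_pmf {..<n}"
| "peel n m G (Suc k) = bind_pmf (peel n m G k) (peel_step m G)"

lemma finite_ripple [simp]: "finite (ripple m G U)"
  unfolding ripple_def by auto

lemma finite_cloud [simp]: "finite (cloud m G U)"
  unfolding cloud_def by auto

lemma dec_step_eq_peel_step: "dec_step m (G, V) = map_pmf (Pair G) (peel_step m G V)"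
  unfolding dec_step_def peel_step_def by (auto simp: map_pmf_comp)

lemma dec_state_eq_peel:
  "dec_state n m \<Omega> k = bind_pmf (graph_pmf n m \<Omega>) (\<lambda>G. map_pmf (Pair G) (peel n m G k))"
proof (induction k)
  case 0
  then show ?case by (simp add: map_pmf_def bind_return_pmf)
next
  case (Suc k)
  then show ?case
    by (simp add: bind_assoc_pmf bind_map_pmf dec_step_eq_peel_step map_pmf_def bind_return_pmf)
qed

lemma pmf_dec_state:
  assumes "set_pmf \<Omega> \<subseteq> {..n}"
  shows "pmf (dec_state n m \<Omega> k) (G, V) = pmf (graph_pmf n m \<Omega>) G * pmf (peel n m G k) V"
proof -
  have "pmf (map_pmf (Pair G') (peel n m G' k)) (G, V) = (if G' = G then pmf (peel n m G k) V else 0)"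
    for G'
  proof -
    have "Pair G' -` {(G, V)} = (if G' = G then {V} else {})" by auto
    then show ?thesis by (simp add: pmf_map measure_pmf_single)
  qed
  then have "pmf (dec_state n m \<Omega> k) (G, V) =
      (\<Sum>G'\<in>graphs n m. pmf (graph_pmf n m \<Omega>) G' * (if G' = G then pmf (peel n m G k) V else 0))"
    unfolding dec_state_eq_peel by (simp add: pmf_bind_finite_support[OF finite_graphs set_graph_pmf[OF assms]])
  also have "\<dots> = (if G \<in> graphs n m then pmf (graph_pmf n m \<Omega>) G * pmf (peel n m G k) V else 0)"
    by (simp add: if_distrib sum.delta finite_graphs cong: if_cong)
  also have "\<dots> = pmf (graph_pmf n m \<Omega>) G * pmf (peel n m G k) V"
    using set_graph_pmf[OF assms] by (auto simp: set_pmf_eq)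
  finally show ?thesis .
qed

lemma ripple_the_elem:
  assumes "i \<in> ripple m G V"
  shows "G i \<inter> V = {the_elem (G i \<inter> V)}"
proof -
  have "card (G i \<inter> V) = 1" using assms by (simp add: ripple_def)
  then obtain e where "G i \<inter> V = {e}" by (auto simp: card_1_singleton_iff)
  then show ?thesis by simp
qed

lemma set_peel_step_cases:
  assumes "U \<in> set_pmf (peel_step m G V)"
  obtains "U = V" | x where "x \<in> V" "U = V - {x}"
proof (cases "ripple m G V = {}")
  case True
  with assms that show ?thesis by (simp add: peel_step_def)
next
  case False
  with assms obtain i where "i \<in> ripple m G V" "U = V - {the_elem (G i \<inter> V)}"
    by (auto simp: peel_step_def)
  moreover from this(1) have "the_elem (G i \<inter> V) \<in> V"
    using ripple_the_elem by blast
  ultimately show ?thesis using that by blast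
qed

lemma set_peel: "set_pmf (peel n m G k) \<subseteq> Pow {..<n}"
proof (induction k)
  case (Suc k)
  show ?case
  proof
    fix U assume "U \<in> set_pmf (peel n m G (Suc k))"
    then obtain V where "U \<in> set_pmf (peel_step m G V)" "V \<in> set_pmf (peel n m G k)" by auto
    then show "U \<in> Pow {..<n}"
      using Suc by (cases rule: set_peel_step_cases) auto
  qed
qed simp

lemma pmf_peel_Suc:
  "pmf (peel n m G (Suc k)) U = (\<Sum>V\<in>Pow {..<n}. pmf (peel n m G k) V * pmf (peel_step m G V) U)"
  by (simp add: pmf_bind_finite_support[OF _ set_peel])

lemma pmf_peel_step:
  "pmf (peel_step m G V) U = (if ripple m G V = {} then indicator {V} U
     else real (card {i \<in> ripple m G V. V - {the_elem (G i \<inter> V)} = U}) / real (card (ripple m G V)))"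
proof -
  have "ripple m G V \<inter> (\<lambda>i. V - {the_elem (G i \<inter> V)}) -` {U} =
      {i \<in> ripple m G V. V - {the_elem (G i \<inter> V)} = U}"
    by auto
  then show ?thesis
    by (simp add: peel_step_def pmf_map measure_pmf_of_set indicator_def)
qed

lemma measure_peel_step:
  assumes "ripple m G V \<noteq> {}"
  shows "measure_pmf.prob (peel_step m G V) A =
    real (card {i \<in> ripple m G V. V - {the_elem (G i \<inter> V)} \<in> A}) / real (card (ripple m G V))"
proof -
  have "ripple m G V \<inter> (\<lambda>i. V - {the_elem (G i \<inter> V)}) -` A = {i \<in> ripple m G V. V - {the_elem (G i \<inter> V)} \<in> A}"
    by auto
  then show ?thesis
    using assms by (simp add: peel_step_def measure_pmf_of_set)
qed

section \<open>Slot keys\<close>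

text \<open>The peeling decoder only ever looks at a graph through the keys of its
  slots (lemma \<open>pmf_peel_cong_slot_key\<close>).\<close>

definition slot_key :: "'a set \<Rightarrow> 'a set \<Rightarrow> nat \<times> 'a set" where
  "slot_key U S = (if 2 \<le> card (S \<inter> U) then (2, {}) else (card (S \<inter> U), S - U))"

lemma fst_slot_key_eq_2_iff: "fst (slot_key U S) = 2 \<longleftrightarrow> 2 \<le> card (S \<inter> U)"
  by (auto simp: slot_key_def)

lemma fst_slot_key_eq_1_iff: "fst (slot_key U S) = 1 \<longleftrightarrow> card (S \<inter> U) = 1"
  by (auto simp: slot_key_def)

lemma fst_slot_key_eq_0_iff: "fst (slot_key U S) = 0 \<longleftrightarrow> card (S \<inter> U) = 0"
  by (auto simp: slot_key_def)

lemma slot_key_eq_2_iff: "slot_key U S = (2, {}) \<longleftrightarrow> 2 \<le> card (S \<inter> U)"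
  by (auto simp: slot_key_def)

lemma slot_key_eq_1_iff: "slot_key U S = (Suc 0, T) \<longleftrightarrow> card (S \<inter> U) = 1 \<and> S - U = T"
  by (auto simp: slot_key_def)

lemma slot_key_eq_1_class:
  assumes "T \<inter> U = {}"
  shows "{S. slot_key U S = (1, T)} = (\<lambda>z. insert z T) ` U"
proof (intro equalityI subsetI)
  fix S assume "S \<in> {S. slot_key U S = (1, T)}"
  then have "card (S \<inter> U) = 1" "S - U = T" by (auto simp: slot_key_eq_1_iff)
  then obtain z where "S \<inter> U = {z}" "S - U = T" by (auto simp: card_1_singleton_iff)
  then show "S \<in> (\<lambda>z. insert z T) ` U" by (intro image_eqI[of _ _ z]) auto
next
  fix S assume "S \<in> (\<lambda>z. insert z T) ` U"
  then obtain z where "z \<in> U" "S = insert z T" by auto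
  with assms have "S \<inter> U = {z}" "S - U = T" by auto
  then show "S \<in> {S. slot_key U S = (1, T)}" by (simp add: slot_key_eq_1_iff)
qed

lemma map_the_elem_pmf_of_set_insert:
  assumes "T \<inter> U = {}" "finite U" "U \<noteq> {}"
  shows "map_pmf (\<lambda>S. the_elem (S \<inter> U)) (pmf_of_set ((\<lambda>z. insert z T) ` U)) = pmf_of_set U"
proof -
  have "inj_on (\<lambda>z. insert z T) U"
  proof (rule inj_onI)
    fix z z' assume "z \<in> U" "z' \<in> U" "insert z T = insert z' T"
    with assms(1) show "z = z'" by blast
  qed
  then have "pmf_of_set ((\<lambda>z. insert z T) ` U) = map_pmf (\<lambda>z. insert z T) (pmf_of_set U)"
    using assms by (intro map_pmf_of_set_inj[symmetric])
  then have "map_pmf (\<lambda>S. the_elem (S \<inter> U)) (pmf_of_set ((\<lambda>z. insert z T) ` U)) =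
      map_pmf (\<lambda>z. the_elem (insert z T \<inter> U)) (pmf_of_set U)"
    by (simp add: map_pmf_comp)
  also have "\<dots> = map_pmf id (pmf_of_set U)"
  proof (rule map_pmf_cong[OF refl])
    fix z assume "z \<in> set_pmf (pmf_of_set U)"
    with assms have "insert z T \<inter> U = {z}" by auto
    then show "the_elem (insert z T \<inter> U) = id z" by simp
  qed
  finally show ?thesis by simp
qed

lemma slot_key_insert:
  assumes "finite U" "slot_key U S = slot_key U S'"
  shows "slot_key (insert x U) S = slot_key (insert x U) S'"
proof (cases "x \<in> U \<or> 2 \<le> card (S \<inter> U)")
  case True
  moreover have "card (S \<inter> U) \<le> card (S \<inter> insert x U)" "card (S' \<inter> U) \<le> card (S' \<inter> insert x U)"
    using assms(1) by (auto intro: card_mono)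
  ultimately show ?thesis
    using assms(2) by (auto simp: insert_absorb slot_key_def split: if_splits)
next
  case False
  then have "card (S \<inter> U) = card (S' \<inter> U)" "S - U = S' - U" "x \<notin> U"
    using assms(2) by (auto simp: slot_key_def split: if_splits)
  moreover from this have "x \<in> S \<longleftrightarrow> x \<in> S'" by blast
  ultimately have "card (S \<inter> insert x U) = card (S' \<inter> insert x U)" "S - insert x U = S' - insert x U"
    using assms(1) by (auto simp: Int_insert_right)
  then show ?thesis by (simp add: slot_key_def)
qed

lemma ripple_cong_slot_key:
  assumes "\<And>j. j < m \<Longrightarrow> slot_key U (G j) = slot_key U (G' j)"
  shows "ripple m G U = ripple m G' U"
  unfolding ripple_def using assms fst_slot_key_eq_1_iff by metis

lemma peel_ripple_slot_eq_iff:
  assumes "i \<in> ripple m G (insert x U)" "x \<notin> U"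
  shows "insert x U - {the_elem (G i \<inter> insert x U)} = U \<longleftrightarrow> G i \<inter> U = {}"
  using ripple_the_elem[OF assms(1)] assms(2) by (auto simp: insert_Diff_if)

lemma the_elem_ripple_mem:
  assumes "i \<in> ripple m G V"
  shows "the_elem (G i \<inter> V) \<in> V"
proof -
  have "the_elem (G i \<inter> V) \<in> G i \<inter> V"
    using ripple_the_elem[OF assms] by (metis singletonI)
  then show ?thesis by simp
qed

lemma pmf_peel_step_self: "pmf (peel_step m G U) U = (if ripple m G U = {} then 1 else 0)"
proof -
  have "{i \<in> ripple m G U. U - {the_elem (G i \<inter> U)} = U} = {}"
    using the_elem_ripple_mem[of _ m G U] by auto
  then show ?thesis by (simp add: pmf_peel_step)
qed

lemma pmf_peel_step_cong_slot_key:
  assumes "finite U" and keys: "\<And>j. j < m \<Longrightarrow> slot_key U (G j) = slot_key U (G' j)"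
  shows "pmf (peel_step m G V) U = pmf (peel_step m G' V) U"
proof (cases "U \<in> set_pmf (peel_step m G V) \<or> U \<in> set_pmf (peel_step m G' V)")
  case False
  then show ?thesis by (simp add: set_pmf_eq)
next
  case True
  then obtain H where "U \<in> set_pmf (peel_step m H V)" by blast
  then show ?thesis
  proof (cases rule: set_peel_step_cases)
    case 1
    then show ?thesis
      using ripple_cong_slot_key[of m U G G', OF keys] by (simp add: pmf_peel_step_self)
  next
    case (2 x)
    then have V: "V = insert x U" "x \<notin> U" by auto
    have keys': "slot_key V (G j) = slot_key V (G' j)" if "j < m" for j
      unfolding V(1) using slot_key_insert[OF assms(1) keys[OF that]] .
    have R: "ripple m G V = ripple m G' V"
      using ripple_cong_slot_key[of m V G G', OF keys'] .
    have "V - {the_elem (G i \<inter> V)} = U \<longleftrightarrow> V - {the_elem (G' i \<inter> V)} = U"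
      if i: "i \<in> ripple m G V" for i
    proof -
      have "i < m" using i by (simp add: ripple_def)
      then have "fst (slot_key U (G i)) = fst (slot_key U (G' i))"
        using keys by simp
      then have "card (G i \<inter> U) = 0 \<longleftrightarrow> card (G' i \<inter> U) = 0"
        by (simp only: fst_slot_key_eq_0_iff[symmetric])
      then have "G i \<inter> U = {} \<longleftrightarrow> G' i \<inter> U = {}"
        using assms(1) by simp
      moreover have "i \<in> ripple m G (insert x U)" "i \<in> ripple m G' (insert x U)"
        using i R V(1) by auto
      ultimately show ?thesis
        unfolding V(1) using peel_ripple_slot_eq_iff[OF _ V(2)] by simp
    qed
    then have "{i \<in> ripple m G V. V - {the_elem (G i \<inter> V)} = U} =
        {i \<in> ripple m G V. V - {the_elem (G' i \<inter> V)} = U}"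
      by (intro Collect_cong) blast
    then show ?thesis
      unfolding pmf_peel_step R by simp
  qed
qed

lemma pmf_peel_cong_slot_key:
  assumes "finite U" "\<And>j. j < m \<Longrightarrow> slot_key U (G j) = slot_key U (G' j)"
  shows "pmf (peel n m G k) U = pmf (peel n m G' k) U"
  using assms
proof (induction k arbitrary: U)
  case (Suc k)
  have step: "pmf (peel n m G k) V * pmf (peel_step m G V) U = pmf (peel n m G' k) V * pmf (peel_step m G' V) U"
    for V
  proof (cases "U \<in> set_pmf (peel_step m G V)")
    case True
    then consider "V = U" | x where "x \<in> V" "U = V - {x}"
      by (cases rule: set_peel_step_cases) auto
    then have "pmf (peel n m G k) V = pmf (peel n m G' k) V"
    proof cases
      case 1
      then show ?thesis using Suc.IH[OF Suc.prems] by simp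
    next
      case (2 x)
      then have V: "V = insert x U" by auto
      have "slot_key V (G j) = slot_key V (G' j)" if "j < m" for j
        unfolding V using slot_key_insert[OF Suc.prems(1) Suc.prems(2)[OF that]] .
      then show ?thesis
        using Suc.prems(1) V by (intro Suc.IH) auto
    qed
    then show ?thesis using pmf_peel_step_cong_slot_key[OF Suc.prems] by simp
  next
    case False
    then show ?thesis using pmf_peel_step_cong_slot_key[OF Suc.prems, where V = V] by (simp add: set_pmf_eq)
  qed
  show ?case
    unfolding pmf_peel_Suc by (rule sum.cong[OF refl step])
qed simp

lemma card_Int_Diff_singleton:
  assumes "finite U" "x \<in> U"
  shows "card (S \<inter> (U - {x})) = card (S \<inter> U) - (if x \<in> S then 1 else 0)"
proof -
  have "S \<inter> (U - {x}) = (S \<inter> U) - {x}" by auto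
  then show ?thesis using assms by (simp add: card_Diff_singleton_if)
qed

lemma cloud_Diff_singleton:
  assumes "finite U" "x \<in> U"
  shows "cloud m G (U - {x}) = cloud m G U - {i. card (G i \<inter> U) = 2 \<and> x \<in> G i}"
proof -
  have "2 \<le> card (G i \<inter> (U - {x})) \<longleftrightarrow> 2 \<le> card (G i \<inter> U) \<and> \<not> (card (G i \<inter> U) = 2 \<and> x \<in> G i)"
    for i by (cases "x \<in> G i") (auto simp: card_Int_Diff_singleton[OF assms])
  then show ?thesis by (auto simp: cloud_def)
qed

lemma ripple_Diff_singleton:
  assumes "finite U" "x \<in> U"
  shows "ripple m G (U - {x}) =
    {i \<in> ripple m G U. x \<notin> G i} \<union> {i \<in> cloud m G U. card (G i \<inter> U) = 2 \<and> x \<in> G i}"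
proof -
  have "card (G i \<inter> (U - {x})) = 1 \<longleftrightarrow>
      card (G i \<inter> U) = 1 \<and> x \<notin> G i \<or> card (G i \<inter> U) = 2 \<and> x \<in> G i" for i
  proof (cases "x \<in> G i")
    case True
    then have "card (G i \<inter> U) \<noteq> 0" using assms by auto
    with True show ?thesis by (simp add: card_Int_Diff_singleton[OF assms]; linarith)
  qed (simp add: card_Int_Diff_singleton[OF assms])
  then show ?thesis by (auto simp: ripple_def cloud_def)
qed

lemma mem_ripple_slot_iff:
  assumes "i \<in> ripple m G U" "x \<in> U"
  shows "x \<in> G i \<longleftrightarrow> the_elem (G i \<inter> U) = x"
proof -
  obtain e where e: "G i \<inter> U = {e}"
    using ripple_the_elem[OF assms(1)] by blast
  then have "x \<in> G i \<longleftrightarrow> x = e" using assms(2) by blast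
  with e show ?thesis by auto
qed

lemma card_cloud_Diff_singleton:
  assumes "finite U" "x \<in> U"
  shows "card (cloud m G (U - {x})) =
    card (cloud m G U) - card {i \<in> cloud m G U. card (G i \<inter> U) = 2 \<and> x \<in> G i}"
proof -
  have "cloud m G (U - {x}) = cloud m G U - {i \<in> cloud m G U. card (G i \<inter> U) = 2 \<and> x \<in> G i}"
    unfolding cloud_Diff_singleton[OF assms] by auto
  then show ?thesis by (simp add: card_Diff_subset)
qed

lemma card_ripple_Diff_singleton:
  assumes "finite U" "x \<in> U"
  shows "card (ripple m G (U - {x})) = card (ripple m G U) - card {i \<in> ripple m G U. x \<in> G i}
    + card {i \<in> cloud m G U. card (G i \<inter> U) = 2 \<and> x \<in> G i}"
proof -
  let ?C = "cloud m G U" and ?R = "ripple m G U"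
  have "ripple m G (U - {x}) = (?R - {i \<in> ?R. x \<in> G i}) \<union> {i \<in> ?C. card (G i \<inter> U) = 2 \<and> x \<in> G i}"
    unfolding ripple_Diff_singleton[OF assms] by auto
  moreover have "card ((?R - {i \<in> ?R. x \<in> G i}) \<union> {i \<in> ?C. card (G i \<inter> U) = 2 \<and> x \<in> G i}) =
      card (?R - {i \<in> ?R. x \<in> G i}) + card {i \<in> ?C. card (G i \<inter> U) = 2 \<and> x \<in> G i}"
    by (intro card_Un_disjoint) (auto simp: ripple_def cloud_def)
  ultimately show ?thesis
    by (simp add: card_Diff_subset)
qed

text \<open>Resolving user \<open>x\<close> removes from the ripple the \<open>a\<close> ripple slots containing \<open>x\<close> and moves into it
  the \<open>b\<close> cloud slots that contain \<open>x\<close> and exactly one other unresolved user.\<close>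

lemma in_state_Diff_singleton_iff:
  assumes "finite U" "x \<in> U" "b \<le> card (cloud m G U)" "a \<le> card (ripple m G U) + b"
  shows "in_state m (card U - 1) (card (cloud m G U) - b) (card (ripple m G U) + b - a) (G, U - {x})
    \<longleftrightarrow> card {i \<in> ripple m G U. x \<in> G i} = a \<and> card {i \<in> cloud m G U. card (G i \<inter> U) = 2 \<and> x \<in> G i} = b"
proof -
  let ?C = "cloud m G U" and ?R = "ripple m G U"
  define \<alpha> where "\<alpha> = card {i \<in> ?R. x \<in> G i}"
  define \<beta> where "\<beta> = card {i \<in> ?C. card (G i \<inter> U) = 2 \<and> x \<in> G i}"
  have "\<beta> \<le> card ?C" "\<alpha> \<le> card ?R"
    unfolding \<alpha>_def \<beta>_def by (auto intro!: card_mono)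
  then have "card ?C - \<beta> = card ?C - b \<longleftrightarrow> \<beta> = b" "card ?R - \<alpha> + b = card ?R + b - a \<longleftrightarrow> \<alpha> = a"
    using assms(3,4) by arith+
  moreover have "card (U - {x}) = card U - 1"
    using assms(1,2) by simp
  ultimately show ?thesis
    using card_cloud_Diff_singleton[OF assms(1,2)] card_ripple_Diff_singleton[OF assms(1,2)]
    by (auto simp: in_state_def \<alpha>_def \<beta>_def)
qed

section \<open>Conditioning the graph on its slot keys\<close>

text \<open>Given the keys, cloud and ripple are fixed and the decoder's history up to the
  current set of unresolved users is fixed as well, while the slots remain independent.\<close>

definition key_pmf :: "nat \<Rightarrow> nat \<Rightarrow> nat pmf \<Rightarrow> nat set \<Rightarrow> (nat \<Rightarrow> nat \<times> nat set) pmf" where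
  "key_pmf n m \<Omega> U = Pi_pmf {..<m} (0, {}) (\<lambda>_. map_pmf (slot_key U) (slot_pmf n \<Omega>))"

definition key_slot_pmf :: "nat \<Rightarrow> nat pmf \<Rightarrow> nat set \<Rightarrow> nat \<times> nat set \<Rightarrow> nat set pmf" where
  "key_slot_pmf n \<Omega> U \<kappa> = cond_pmf (slot_pmf n \<Omega>) {S. slot_key U S = \<kappa>}"

definition key_graph_pmf ::
    "nat \<Rightarrow> nat \<Rightarrow> nat pmf \<Rightarrow> nat set \<Rightarrow> (nat \<Rightarrow> nat \<times> nat set) \<Rightarrow> (nat \<Rightarrow> nat set) pmf" where
  "key_graph_pmf n m \<Omega> U \<kappa> = Pi_pmf {..<m} {} (\<lambda>j. key_slot_pmf n \<Omega> U (\<kappa> j))"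

definition key_cloud :: "nat \<Rightarrow> (nat \<Rightarrow> nat \<times> 'a set) \<Rightarrow> nat set" where
  "key_cloud m \<kappa> = {j. j < m \<and> fst (\<kappa> j) = 2}"

definition key_ripple :: "nat \<Rightarrow> (nat \<Rightarrow> nat \<times> 'a set) \<Rightarrow> nat set" where
  "key_ripple m \<kappa> = {j. j < m \<and> fst (\<kappa> j) = 1}"

lemma graph_pmf_eq_bind_key_graph_pmf:
  "graph_pmf n m \<Omega> = bind_pmf (key_pmf n m \<Omega> U) (key_graph_pmf n m \<Omega> U)"
proof -
  have "graph_pmf n m \<Omega> = Pi_pmf {..<m} {} (\<lambda>_. bind_pmf (map_pmf (slot_key U) (slot_pmf n \<Omega>))
          (key_slot_pmf n \<Omega> U))"
    unfolding graph_pmf_def key_slot_pmf_def bind_cond_pmf_fibres ..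
  also have "\<dots> = bind_pmf (key_pmf n m \<Omega> U) (key_graph_pmf n m \<Omega> U)"
    unfolding key_pmf_def key_graph_pmf_def by (rule Pi_pmf_bind) simp
  finally show ?thesis .
qed

lemma finite_set_key_pmf:
  assumes "set_pmf \<Omega> \<subseteq> {..n}"
  shows "finite (set_pmf (key_pmf n m \<Omega> U))"
proof -
  have "finite (slot_key U ` set_pmf (slot_pmf n \<Omega>))"
    using set_slot_pmf[OF assms] by (intro finite_imageI) (simp add: finite_subset)
  then show ?thesis
    unfolding key_pmf_def set_Pi_pmf[OF finite_lessThan] by (intro finite_PiE_dflt) auto
qed

context
  fixes n m u :: nat and U :: "nat set" and \<Omega> :: "nat pmf" and \<kappa> :: "nat \<Rightarrow> nat \<times> nat set"
  assumes U: "U \<subseteq> {..<n}" "card U = u" and u_pos: "1 \<le> u" and deg: "set_pmf \<Omega> \<subseteq> {..n}"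
    and \<kappa>: "\<kappa> \<in> set_pmf (key_pmf n m \<Omega> U)"
begin

lemma finite_U: "finite U"
  using U finite_subset by blast

lemma key_attained: "j < m \<Longrightarrow> \<exists>S \<in> set_pmf (slot_pmf n \<Omega>). slot_key U S = \<kappa> j"
  using \<kappa> by (fastforce simp: key_pmf_def set_Pi_pmf PiE_dflt_def image_iff)

lemma set_key_slot_pmf:
  "j < m \<Longrightarrow> set_pmf (key_slot_pmf n \<Omega> U (\<kappa> j)) = set_pmf (slot_pmf n \<Omega>) \<inter> {S. slot_key U S = \<kappa> j}"
  unfolding key_slot_pmf_def using key_attained by (subst set_cond_pmf) auto

lemma set_key_graph_pmf:
  assumes "G \<in> set_pmf (key_graph_pmf n m \<Omega> U \<kappa>)"
  shows "\<And>j. j < m \<Longrightarrow> G j \<in> set_pmf (slot_pmf n \<Omega>) \<and> slot_key U (G j) = \<kappa> j"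
    and "\<And>j. \<not> j < m \<Longrightarrow> G j = {}"
  using assms set_key_slot_pmf unfolding key_graph_pmf_def
  by (auto simp: set_Pi_pmf PiE_dflt_def)

lemma set_key_graph_pmf_subset: "set_pmf (key_graph_pmf n m \<Omega> U \<kappa>) \<subseteq> graphs n m"
  using set_key_graph_pmf set_slot_pmf[OF deg] by (fastforce simp: graphs_def PiE_dflt_def)

lemma finite_set_key_graph_pmf: "finite (set_pmf (key_graph_pmf n m \<Omega> U \<kappa>))"
  using set_key_graph_pmf_subset finite_graphs by (rule finite_subset)

lemma cloud_key_graph:
  "G \<in> set_pmf (key_graph_pmf n m \<Omega> U \<kappa>) \<Longrightarrow> cloud m G U = key_cloud m \<kappa>"
  using set_key_graph_pmf(1) fst_slot_key_eq_2_iff by (force simp: cloud_def key_cloud_def)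

lemma ripple_key_graph:
  "G \<in> set_pmf (key_graph_pmf n m \<Omega> U \<kappa>) \<Longrightarrow> ripple m G U = key_ripple m \<kappa>"
  using set_key_graph_pmf(1) fst_slot_key_eq_1_iff by (force simp: ripple_def key_ripple_def)

text \<open>All slots with a given ripple key \<open>(1, T)\<close> are equally likely, so the unresolved neighbour of
  a ripple slot is uniform on \<open>U\<close>.\<close>

lemma map_the_elem_key_slot_pmf:
  assumes "j \<in> key_ripple m \<kappa>"
  shows "map_pmf (\<lambda>S. the_elem (S \<inter> U)) (key_slot_pmf n \<Omega> U (\<kappa> j)) = pmf_of_set U"
proof -
  have j: "j < m" "fst (\<kappa> j) = 1"
    using assms by (simp_all add: key_ripple_def)
  obtain S0 where S0: "S0 \<in> set_pmf (slot_pmf n \<Omega>)" "slot_key U S0 = \<kappa> j"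
    using key_attained[OF j(1)] by blast
  define T where "T = S0 - U"
  have "card (S0 \<inter> U) = 1"
    using S0(2) j(2) fst_slot_key_eq_1_iff[of U S0] by simp
  then have \<kappa>j: "\<kappa> j = (1, T)"
    using S0(2) by (simp add: slot_key_def T_def)
  have T: "T \<subseteq> {..<n}" "T \<inter> U = {}"
    using S0(1) set_slot_pmf[OF deg] by (auto simp: T_def)
  from T(1) have finite_T: "finite T" by (rule finite_subset) simp
  have key_class: "{S. slot_key U S = \<kappa> j} = (\<lambda>z. insert z T) ` U"
    unfolding \<kappa>j using T(2) by (rule slot_key_eq_1_class)
  have "key_slot_pmf n \<Omega> U (\<kappa> j) = pmf_of_set ((\<lambda>z. insert z T) ` U)"
    unfolding key_slot_pmf_def key_class
  proof (rule cond_pmf_eq_pmf_of_set)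
    have "S0 \<in> (\<lambda>z. insert z T) ` U"
      unfolding key_class[symmetric] using S0(2) by simp
    with S0(1) show "set_pmf (slot_pmf n \<Omega>) \<inter> (\<lambda>z. insert z T) ` U \<noteq> {}"
      by blast
    show "pmf (slot_pmf n \<Omega>) S = pmf \<Omega> (Suc (card T)) / real (n choose Suc (card T))"
      if S: "S \<in> (\<lambda>z. insert z T) ` U" for S
    proof -
      obtain z where z: "z \<in> U" "S = insert z T" using S by auto
      with T have "z \<notin> T" by blast
      with z T finite_T U(1) have "S \<subseteq> {..<n}" "card S = Suc (card T)" by auto
      then show ?thesis by (simp add: pmf_slot_pmf[OF deg])
    qed
  qed (use finite_U in simp)
  moreover have "U \<noteq> {}" using U u_pos by auto
  ultimately show ?thesis
    using map_the_elem_pmf_of_set_insert[OF T(2) finite_U] by simp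
qed

lemma key_slot_pmf_cloud:
  assumes "j \<in> key_cloud m \<kappa>"
  shows "key_slot_pmf n \<Omega> U (\<kappa> j) = cond_pmf (slot_pmf n \<Omega>) {S. 2 \<le> card (S \<inter> U)}"
proof -
  have j: "j < m" "fst (\<kappa> j) = 2"
    using assms by (simp_all add: key_cloud_def)
  obtain S0 where S0: "S0 \<in> set_pmf (slot_pmf n \<Omega>)" "slot_key U S0 = \<kappa> j"
    using key_attained[OF j(1)] by blast
  have "2 \<le> card (S0 \<inter> U)"
    using S0(2) j(2) fst_slot_key_eq_2_iff[of U S0] by simp
  then have "\<kappa> j = (2, {})"
    using S0(2) slot_key_eq_2_iff[of U S0] by simp
  then show ?thesis
    by (simp add: key_slot_pmf_def slot_key_eq_2_iff)
qed

lemma finite_key_cloud: "finite (key_cloud m \<kappa>)"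
  by (simp add: key_cloud_def)

lemma finite_key_ripple: "finite (key_ripple m \<kappa>)"
  by (simp add: key_ripple_def)

lemma prob_key_cloud_joins_ripple:
  assumes "x \<in> U"
  shows "measure_pmf.prob (Pi_pmf (key_cloud m \<kappa>) {} (\<lambda>i. key_slot_pmf n \<Omega> U (\<kappa> i)))
      {g. card {i \<in> key_cloud m \<kappa>. card (g i \<inter> U) = 2 \<and> x \<in> g i} = b} =
    real (card (key_cloud m \<kappa>) choose b) * q_u n \<Omega> u ^ b * (1 - q_u n \<Omega> u) ^ (card (key_cloud m \<kappa>) - b)"
proof -
  let ?C = "key_cloud m \<kappa>" and ?p = "cond_pmf (slot_pmf n \<Omega>) {S. 2 \<le> card (S \<inter> U)}"
  let ?P = "\<lambda>S. card (S \<inter> U) = 2 \<and> x \<in> S"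
  have "Pi_pmf ?C {} (\<lambda>i. key_slot_pmf n \<Omega> U (\<kappa> i)) = Pi_pmf ?C {} (\<lambda>_. ?p)"
    by (intro Pi_pmf_cong refl) (simp add: key_slot_pmf_cloud)
  then have "measure_pmf.prob (Pi_pmf ?C {} (\<lambda>i. key_slot_pmf n \<Omega> U (\<kappa> i))) {g. card {i \<in> ?C. ?P (g i)} = b} =
      real (card ?C choose b) * measure_pmf.prob ?p {S. ?P S} ^ b * (1 - measure_pmf.prob ?p {S. ?P S}) ^ (card ?C - b)"
    using measure_Pi_pmf_card_eq[OF finite_key_cloud, of "{}" ?p ?P b] by simp
  moreover have "measure_pmf.prob ?p {S. ?P S} = q_u n \<Omega> u" if "?C \<noteq> {}"
  proof -
    from that obtain j where j: "j < m" "fst (\<kappa> j) = 2"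
      by (auto simp: key_cloud_def)
    then obtain S where "S \<in> set_pmf (slot_pmf n \<Omega>)" "slot_key U S = \<kappa> j"
      using key_attained by blast
    moreover from this(2) j(2) have "2 \<le> card (S \<inter> U)"
      using fst_slot_key_eq_2_iff[of U S] by simp
    ultimately have "set_pmf (slot_pmf n \<Omega>) \<inter> {S. 2 \<le> card (S \<inter> U)} \<noteq> {}"
      by blast
    then show ?thesis
      using prob_cond_cloud_slot_joins_ripple[OF U u_pos deg assms] by simp
  qed
  ultimately show ?thesis
    by (cases "?C = {}"; cases b) simp_all
qed

lemma prob_key_ripple_same_unresolved:
  assumes "j \<in> key_ripple m \<kappa>" "1 \<le> a"
  shows "measure_pmf.prob (Pi_pmf (key_ripple m \<kappa>) {} (\<lambda>i. key_slot_pmf n \<Omega> U (\<kappa> i)))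
      {f. card {i \<in> key_ripple m \<kappa>. the_elem (f i \<inter> U) = the_elem (f j \<inter> U)} = a} =
    real ((card (key_ripple m \<kappa>) - 1) choose (a - 1)) * (1 / real u) ^ (a - 1)
      * (1 - 1 / real u) ^ (card (key_ripple m \<kappa>) - a)"
proof -
  let ?R = "key_ripple m \<kappa>" and ?e = "\<lambda>S. the_elem (S \<inter> U)"
  have "map_pmf (\<lambda>h. ?e \<circ> h) (Pi_pmf ?R {} (\<lambda>i. key_slot_pmf n \<Omega> U (\<kappa> i))) =
      Pi_pmf ?R (?e {}) (\<lambda>i. map_pmf ?e (key_slot_pmf n \<Omega> U (\<kappa> i)))"
    by (rule Pi_pmf_map[symmetric]) (auto simp: key_ripple_def)
  also have "\<dots> = Pi_pmf ?R (?e {}) (\<lambda>_. pmf_of_set U)"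
    by (intro Pi_pmf_cong refl) (simp add: map_the_elem_key_slot_pmf)
  finally have map_eq: "map_pmf (\<lambda>h. ?e \<circ> h) (Pi_pmf ?R {} (\<lambda>i. key_slot_pmf n \<Omega> U (\<kappa> i))) =
      Pi_pmf ?R (?e {}) (\<lambda>_. pmf_of_set U)" .
  have "{f. card {i \<in> ?R. ?e (f i) = ?e (f j)} = a} =
      (\<lambda>h. ?e \<circ> h) -` {f. card {i \<in> ?R. f i = f j} = a}"
    by auto
  then have "measure_pmf.prob (Pi_pmf ?R {} (\<lambda>i. key_slot_pmf n \<Omega> U (\<kappa> i)))
      {f. card {i \<in> ?R. ?e (f i) = ?e (f j)} = a} =
      measure_pmf.prob (Pi_pmf ?R (?e {}) (\<lambda>_. pmf_of_set U)) {f. card {i \<in> ?R. f i = f j} = a}"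
    by (simp only: measure_map_pmf[symmetric] map_eq)
  also have "\<dots> = real ((card ?R - 1) choose (a - 1)) * (1 / real u) ^ (a - 1) * (1 - 1 / real u) ^ (card ?R - a)"
  proof -
    have "finite ?R" "U \<noteq> {}" using U u_pos by (auto simp: key_ripple_def)
    then show ?thesis
      using measure_Pi_pmf_of_set_card_same[OF _ assms(1) finite_U _ assms(2)] U(2) by simp
  qed
  finally show ?thesis .
qed

lemma finite_set_Pi_key_slot_pmf:
  assumes "I \<subseteq> {..<m}"
  shows "finite (set_pmf (Pi_pmf I {} (\<lambda>i. key_slot_pmf n \<Omega> U (\<kappa> i))))"
proof -
  have "finite I" using assms finite_subset by blast
  moreover have "set_pmf (key_slot_pmf n \<Omega> U (\<kappa> i)) \<subseteq> Pow {..<n}" if "i \<in> I" for i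
    using that assms set_key_slot_pmf set_slot_pmf[OF deg] by blast
  ultimately have "set_pmf (Pi_pmf I {} (\<lambda>i. key_slot_pmf n \<Omega> U (\<kappa> i))) \<subseteq> PiE_dflt I {} (\<lambda>_. Pow {..<n})"
    by (auto simp: set_Pi_pmf PiE_dflt_def)
  moreover have "finite (PiE_dflt I {} (\<lambda>_. Pow {..<n}))"
    using \<open>finite I\<close> by (intro finite_PiE_dflt) auto
  ultimately show ?thesis by (rule finite_subset)
qed

text \<open>Given the keys, the ripple
  slots are i.i.d.\ with unresolved neighbour uniform on \<open>U\<close>, the cloud slots are i.i.d.\ and contain
  \<open>x\<close> with exactly one other unresolved neighbour with probability \<open>q_u\<close>, and the two families are
  independent.\<close>

lemma in_state_after_peeling_iff:
  assumes G: "G \<in> set_pmf (key_graph_pmf n m \<Omega> U \<kappa>)" and j: "j \<in> key_ripple m \<kappa>"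
    and "b \<le> card (key_cloud m \<kappa>)" "a \<le> card (key_ripple m \<kappa>) + b"
  shows "in_state m (u - 1) (card (key_cloud m \<kappa>) - b) (card (key_ripple m \<kappa>) + b - a)
      (G, U - {the_elem (G j \<inter> U)}) \<longleftrightarrow>
    card {i \<in> key_ripple m \<kappa>. the_elem (G i \<inter> U) = the_elem (G j \<inter> U)} = a \<and>
    card {i \<in> key_cloud m \<kappa>. card (G i \<inter> U) = 2 \<and> the_elem (G j \<inter> U) \<in> G i} = b"
proof -
  let ?x = "the_elem (G j \<inter> U)"
  have C: "cloud m G U = key_cloud m \<kappa>" and R: "ripple m G U = key_ripple m \<kappa>"
    using cloud_key_graph[OF G] ripple_key_graph[OF G] .
  have x: "?x \<in> U"
    using j R the_elem_ripple_mem by blast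
  have "{i \<in> key_ripple m \<kappa>. ?x \<in> G i} = {i \<in> key_ripple m \<kappa>. the_elem (G i \<inter> U) = ?x}"
    using mem_ripple_slot_iff[OF _ x, of _ m G] R by auto
  then show ?thesis
    using in_state_Diff_singleton_iff[OF finite_U x, of b m G a] C R assms(3,4) U(2) by simp
qed

lemma prob_key_ripple_cloud_pair:
  assumes j: "j \<in> key_ripple m \<kappa>" and "1 \<le> a"
  shows "measure_pmf.prob (pair_pmf (Pi_pmf (key_ripple m \<kappa>) {} (\<lambda>i. key_slot_pmf n \<Omega> U (\<kappa> i)))
      (Pi_pmf (key_cloud m \<kappa>) {} (\<lambda>i. key_slot_pmf n \<Omega> U (\<kappa> i))))
      {(f, g). card {i \<in> key_ripple m \<kappa>. the_elem (f i \<inter> U) = the_elem (f j \<inter> U)} = a \<and>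
        card {i \<in> key_cloud m \<kappa>. card (g i \<inter> U) = 2 \<and> the_elem (f j \<inter> U) \<in> g i} = b} =
    trans_prob n \<Omega> u (card (key_cloud m \<kappa>)) (card (key_ripple m \<kappa>)) a b"
proof -
  let ?C = "key_cloud m \<kappa>" and ?R = "key_ripple m \<kappa>" and ?e = "\<lambda>S. the_elem (S \<inter> U)"
  let ?P1 = "Pi_pmf ?R {} (\<lambda>i. key_slot_pmf n \<Omega> U (\<kappa> i))"
  let ?A = "\<lambda>f. card {i \<in> ?R. ?e (f i) = ?e (f j)} = a"
  let ?B = "\<lambda>x g. card {i \<in> ?C. card (g i \<inter> U) = 2 \<and> x \<in> g i} = b"
  have "measure_pmf.prob (pair_pmf ?P1 (Pi_pmf ?C {} (\<lambda>i. key_slot_pmf n \<Omega> U (\<kappa> i))))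
      {(f, g). ?A f \<and> ?B (?e (f j)) g} =
    real (card ?C choose b) * q_u n \<Omega> u ^ b * (1 - q_u n \<Omega> u) ^ (card ?C - b) * measure_pmf.prob ?P1 {f. ?A f}"
  proof (rule measure_pair_pmf_const_sections)
    show "finite (set_pmf ?P1)"
      by (rule finite_set_Pi_key_slot_pmf) (auto simp: key_ripple_def)
  next
    fix f assume "f \<in> set_pmf ?P1"
    have jm: "j < m" "fst (\<kappa> j) = 1" using j by (simp_all add: key_ripple_def)
    have "f j \<in> set_pmf (key_slot_pmf n \<Omega> U (\<kappa> j))"
      using \<open>f \<in> set_pmf ?P1\<close> j unfolding set_Pi_pmf[OF finite_key_ripple] by (auto simp: PiE_dflt_def)
    then have "card (f j \<inter> U) = 1"
      using set_key_slot_pmf[OF jm(1)] jm(2) fst_slot_key_eq_1_iff[of U "f j"] by simp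
    then obtain z where z: "f j \<inter> U = {z}"
      by (auto simp: card_1_singleton_iff)
    then have "z \<in> U" by blast
    with z have x: "?e (f j) \<in> U" by simp
    have "{g. (f, g) \<in> {(f, g). ?A f \<and> ?B (?e (f j)) g}} = (if ?A f then {g. ?B (?e (f j)) g} else {})"
      by auto
    then show "measure_pmf.prob (Pi_pmf ?C {} (\<lambda>i. key_slot_pmf n \<Omega> U (\<kappa> i)))
        {g. (f, g) \<in> {(f, g). ?A f \<and> ?B (?e (f j)) g}} =
        (if ?A f then real (card ?C choose b) * q_u n \<Omega> u ^ b * (1 - q_u n \<Omega> u) ^ (card ?C - b) else 0)"
      by (simp add: prob_key_cloud_joins_ripple[OF x])
  qed
  then show ?thesis
    using prob_key_ripple_same_unresolved[OF assms] by (simp add: trans_prob_def)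
qed

lemma prob_key_graph_in_state_after_peeling:
  assumes j: "j \<in> key_ripple m \<kappa>"
    and ab: "b \<le> card (key_cloud m \<kappa>)" "1 \<le> a" "a \<le> card (key_ripple m \<kappa>) + b"
  shows "measure_pmf.prob (key_graph_pmf n m \<Omega> U \<kappa>)
      {G. in_state m (u - 1) (card (key_cloud m \<kappa>) - b) (card (key_ripple m \<kappa>) + b - a)
            (G, U - {the_elem (G j \<inter> U)})} =
    trans_prob n \<Omega> u (card (key_cloud m \<kappa>)) (card (key_ripple m \<kappa>)) a b"
proof -
  let ?C = "key_cloud m \<kappa>" and ?R = "key_ripple m \<kappa>" and ?Q = "key_graph_pmf n m \<Omega> U \<kappa>"
  let ?e = "\<lambda>S. the_elem (S \<inter> U)"
  let ?E = "{G. in_state m (u - 1) (card ?C - b) (card ?R + b - a) (G, U - {?e (G j)})}"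
  define F where "F = {(f, g). card {i \<in> ?R. ?e (f i) = ?e (f j)} = a \<and>
    card {i \<in> ?C. card (g i \<inter> U) = 2 \<and> ?e (f j) \<in> g i} = b}"
  define parts where "parts G = (\<lambda>i. if i \<in> ?R then G i else {}, \<lambda>i. if i \<in> ?C then G i else {})"
    for G :: "nat \<Rightarrow> nat set"
  have "G \<in> ?E \<longleftrightarrow> parts G \<in> F" if "G \<in> set_pmf ?Q" for G
  proof -
    have "{i \<in> ?R. ?e (fst (parts G) i) = ?e (fst (parts G) j)} = {i \<in> ?R. ?e (G i) = ?e (G j)}"
      "{i \<in> ?C. card (snd (parts G) i \<inter> U) = 2 \<and> ?e (fst (parts G) j) \<in> snd (parts G) i} =
        {i \<in> ?C. card (G i \<inter> U) = 2 \<and> ?e (G j) \<in> G i}"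
      using j by (auto simp: parts_def)
    then show ?thesis
      using in_state_after_peeling_iff[OF that j ab(1,3)] by (simp add: F_def case_prod_beta)
  qed
  then have event: "?E \<inter> set_pmf ?Q = parts -` F \<inter> set_pmf ?Q"
    by blast
  have map_parts: "map_pmf parts ?Q = pair_pmf (Pi_pmf ?R {} (\<lambda>i. key_slot_pmf n \<Omega> U (\<kappa> i)))
      (Pi_pmf ?C {} (\<lambda>i. key_slot_pmf n \<Omega> U (\<kappa> i)))"
    unfolding parts_def key_graph_pmf_def
    by (rule map_Pi_pmf_restrict_disjoint) (auto simp: key_cloud_def key_ripple_def)
  have "measure_pmf.prob ?Q ?E = measure_pmf.prob ?Q (?E \<inter> set_pmf ?Q)"
    by (rule measure_Int_set_pmf[symmetric])
  also have "\<dots> = measure_pmf.prob ?Q (parts -` F)"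
    unfolding event by (rule measure_Int_set_pmf)
  also have "\<dots> = measure_pmf.prob (map_pmf parts ?Q) F"
    by simp
  finally show ?thesis
    unfolding map_parts F_def prob_key_ripple_cloud_pair[OF j ab(2)] .
qed

lemma sum_key_graph_prob_peel_step:
  assumes R: "key_ripple m \<kappa> \<noteq> {}"
    and ab: "b \<le> card (key_cloud m \<kappa>)" "1 \<le> a" "a \<le> card (key_ripple m \<kappa>) + b"
  shows "(\<Sum>G\<in>set_pmf (key_graph_pmf n m \<Omega> U \<kappa>). pmf (key_graph_pmf n m \<Omega> U \<kappa>) G *
      measure_pmf.prob (peel_step m G U)
        {V. in_state m (u - 1) (card (key_cloud m \<kappa>) - b) (card (key_ripple m \<kappa>) + b - a) (G, V)}) =
    trans_prob n \<Omega> u (card (key_cloud m \<kappa>)) (card (key_ripple m \<kappa>)) a b"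
    (is "?L = ?f")
proof -
  let ?C = "key_cloud m \<kappa>" and ?R = "key_ripple m \<kappa>" and ?Q = "key_graph_pmf n m \<Omega> U \<kappa>"
  let ?W = "\<lambda>G V. in_state m (u - 1) (card ?C - b) (card ?R + b - a) (G, V)"
  define E where "E j = {G. ?W G (U - {the_elem (G j \<inter> U)})}" for j
  have step: "measure_pmf.prob (peel_step m G U) {V. ?W G V} = (\<Sum>j\<in>?R. indicator (E j) G) / real (card ?R)"
    if G: "G \<in> set_pmf ?Q" for G
  proof -
    have "real (card {j \<in> ?R. G \<in> E j}) = (\<Sum>j\<in>?R. indicator (E j) G)"
      by (simp add: indicator_def Int_def key_ripple_def)
    then show ?thesis
      using R by (simp add: measure_peel_step ripple_key_graph[OF G] E_def)
  qed
  have "?L = (\<Sum>G\<in>set_pmf ?Q. \<Sum>j\<in>?R. pmf ?Q G * indicator (E j) G / real (card ?R))"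
  proof (intro sum.cong refl)
    fix G assume "G \<in> set_pmf ?Q"
    then show "pmf ?Q G * measure_pmf.prob (peel_step m G U) {V. ?W G V} =
        (\<Sum>j\<in>?R. pmf ?Q G * indicator (E j) G / real (card ?R))"
      unfolding step[OF \<open>G \<in> set_pmf ?Q\<close>] by (simp add: sum_distrib_left sum_divide_distrib)
  qed
  also have "\<dots> = (\<Sum>j\<in>?R. (\<Sum>G\<in>set_pmf ?Q. pmf ?Q G * indicator (E j) G) / real (card ?R))"
    by (subst sum.swap) (simp add: sum_divide_distrib)
  also have "\<dots> = (\<Sum>j\<in>?R. ?f / real (card ?R))"
  proof (intro sum.cong refl)
    fix j assume j: "j \<in> ?R"
    have "(\<Sum>G\<in>set_pmf ?Q. pmf ?Q G * indicator (E j) G) = measure_pmf.prob ?Q (E j)"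
      using finite_set_key_graph_pmf by (rule measure_pmf_finite_support[symmetric]) simp
    also have "\<dots> = ?f"
      unfolding E_def by (rule prob_key_graph_in_state_after_peeling[OF j ab])
    finally show "(\<Sum>G\<in>set_pmf ?Q. pmf ?Q G * indicator (E j) G) / real (card ?R) = ?f / real (card ?R)"
      by simp
  qed
  also have "\<dots> = ?f"
    using R by (simp add: key_ripple_def)
  finally show ?thesis .
qed

text \<open>Given the keys, the decoder state at \<open>U\<close> and the probability of having reached \<open>U\<close> are fixed,
  so the transition probability can be averaged over the conditioned graph alone.\<close>

lemma sum_key_graph_in_state_peel:
  assumes "r > 0" "b \<le> c" "1 \<le> a" "a \<le> r + b"
  shows "(\<Sum>G\<in>graphs n m. pmf (key_graph_pmf n m \<Omega> U \<kappa>) G *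
      (if in_state m u c r (G, U) then pmf (peel n m G k) U
         * measure_pmf.prob (peel_step m G U) {V. in_state m (u - 1) (c - b) (r + b - a) (G, V)} else 0)) =
    trans_prob n \<Omega> u c r a b * (\<Sum>G\<in>graphs n m. pmf (key_graph_pmf n m \<Omega> U \<kappa>) G *
      (if in_state m u c r (G, U) then pmf (peel n m G k) U else 0))"
proof -
  let ?Q = "key_graph_pmf n m \<Omega> U \<kappa>"
  let ?P = "\<lambda>G. measure_pmf.prob (peel_step m G U) {V. in_state m (u - 1) (c - b) (r + b - a) (G, V)}"
  obtain G0 where G0: "G0 \<in> set_pmf ?Q" using set_pmf_not_empty[of ?Q] by blast
  have same_peel: "pmf (peel n m G k) U = pmf (peel n m G0 k) U" if "G \<in> set_pmf ?Q" for G
    using set_key_graph_pmf(1)[OF that] set_key_graph_pmf(1)[OF G0]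
    by (intro pmf_peel_cong_slot_key[OF finite_U]) simp
  have same_state: "in_state m u c r (G, U) \<longleftrightarrow> in_state m u c r (G0, U)" if "G \<in> set_pmf ?Q" for G
    using cloud_key_graph[OF that] cloud_key_graph[OF G0] ripple_key_graph[OF that] ripple_key_graph[OF G0]
    by (simp add: in_state_def)
  have restrict: "(\<Sum>G\<in>graphs n m. pmf ?Q G * h G) = (\<Sum>G\<in>set_pmf ?Q. pmf ?Q G * h G)" for h
    using set_key_graph_pmf_subset finite_graphs by (intro sum.mono_neutral_right) (auto simp: set_pmf_eq)
  show ?thesis
  proof (cases "in_state m u c r (G0, U)")
    case False
    then show ?thesis unfolding restrict by (simp add: same_state cong: sum.cong)
  next
    case True
    then have C: "card (key_cloud m \<kappa>) = c" and R: "card (key_ripple m \<kappa>) = r"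
      using cloud_key_graph[OF G0] ripple_key_graph[OF G0] by (auto simp: in_state_def)
    with assms(1) have "key_ripple m \<kappa> \<noteq> {}" by auto
    then have "(\<Sum>G\<in>set_pmf ?Q. pmf ?Q G * ?P G) = trans_prob n \<Omega> u c r a b"
      using sum_key_graph_prob_peel_step[of b a] assms(2-4) unfolding C R by blast
    moreover have "(\<Sum>G\<in>set_pmf ?Q. pmf ?Q G) = 1"
      using finite_set_key_graph_pmf by (rule sum_pmf_eq_1) simp
    moreover have "(\<Sum>G\<in>set_pmf ?Q. pmf ?Q G * (if in_state m u c r (G, U) then pmf (peel n m G k) U * ?P G else 0))
        = pmf (peel n m G0 k) U * (\<Sum>G\<in>set_pmf ?Q. pmf ?Q G * ?P G)"
      unfolding sum_distrib_left using True by (intro sum.cong refl) (simp add: same_state same_peel)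
    moreover have "(\<Sum>G\<in>set_pmf ?Q. pmf ?Q G * (if in_state m u c r (G, U) then pmf (peel n m G k) U else 0))
        = pmf (peel n m G0 k) U * (\<Sum>G\<in>set_pmf ?Q. pmf ?Q G)"
      unfolding sum_distrib_left using True by (intro sum.cong refl) (simp add: same_state same_peel)
    ultimately show ?thesis
      unfolding restrict by simp
  qed
qed

end

lemma sum_pmf_bind_finite_support:
  assumes "finite B" "set_pmf p \<subseteq> B"
  shows "(\<Sum>x\<in>A. pmf (bind_pmf p f) x * h x) = (\<Sum>y\<in>B. pmf p y * (\<Sum>x\<in>A. pmf (f y) x * h x))"
  by (simp add: pmf_bind_finite_support[OF assms] sum_distrib_left sum_distrib_right mult.assoc)
     (rule sum.swap)

lemma sum_graph_in_state_peel:
  assumes U: "U \<subseteq> {..<n}" and u_pos: "1 \<le> u" and deg: "set_pmf \<Omega> \<subseteq> {..n}"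
    and "r > 0" "b \<le> c" "1 \<le> a" "a \<le> r + b"
  shows "(\<Sum>G\<in>graphs n m. pmf (graph_pmf n m \<Omega>) G *
      (if in_state m u c r (G, U) then pmf (peel n m G k) U
         * measure_pmf.prob (peel_step m G U) {V. in_state m (u - 1) (c - b) (r + b - a) (G, V)} else 0)) =
    trans_prob n \<Omega> u c r a b * (\<Sum>G\<in>graphs n m. pmf (graph_pmf n m \<Omega>) G *
      (if in_state m u c r (G, U) then pmf (peel n m G k) U else 0))"
proof (cases "card U = u")
  case True
  let ?K = "key_pmf n m \<Omega> U" and ?g = "graph_pmf n m \<Omega>" and ?f = "trans_prob n \<Omega> u c r a b"
  let ?h1 = "\<lambda>G. if in_state m u c r (G, U) then pmf (peel n m G k) U
         * measure_pmf.prob (peel_step m G U) {V. in_state m (u - 1) (c - b) (r + b - a) (G, V)} else 0"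
  let ?h2 = "\<lambda>G. if in_state m u c r (G, U) then pmf (peel n m G k) U else 0"
  note decompose = sum_pmf_bind_finite_support[OF finite_set_key_pmf[OF deg] order_refl]
  have "(\<Sum>G\<in>graphs n m. pmf ?g G * ?h1 G) =
      (\<Sum>\<kappa>\<in>set_pmf ?K. pmf ?K \<kappa> * (\<Sum>G\<in>graphs n m. pmf (key_graph_pmf n m \<Omega> U \<kappa>) G * ?h1 G))"
    unfolding graph_pmf_eq_bind_key_graph_pmf[of n m \<Omega> U] by (rule decompose)
  also have "\<dots> = (\<Sum>\<kappa>\<in>set_pmf ?K. ?f * (pmf ?K \<kappa> * (\<Sum>G\<in>graphs n m. pmf (key_graph_pmf n m \<Omega> U \<kappa>) G * ?h2 G)))"
    using sum_key_graph_in_state_peel[OF U True u_pos deg _ assms(4-7)]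
    by (intro sum.cong refl) (simp only: mult.left_commute)
  also have "\<dots> = ?f * (\<Sum>G\<in>graphs n m. pmf ?g G * ?h2 G)"
    unfolding graph_pmf_eq_bind_key_graph_pmf[of n m \<Omega> U] decompose sum_distrib_left ..
  finally show ?thesis .
next
  case False
  then show ?thesis by (simp add: in_state_def)
qed

lemma set_dec_state:
  assumes "set_pmf \<Omega> \<subseteq> {..n}"
  shows "set_pmf (dec_state n m \<Omega> k) \<subseteq> graphs n m \<times> Pow {..<n}"
proof
  fix s assume "s \<in> set_pmf (dec_state n m \<Omega> k)"
  then obtain G V where "s = (G, V)" "G \<in> set_pmf (graph_pmf n m \<Omega>)" "V \<in> set_pmf (peel n m G k)"
    by (auto simp: dec_state_eq_peel)
  then show "s \<in> graphs n m \<times> Pow {..<n}"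
    using set_graph_pmf[OF assms] set_peel by blast
qed

lemma finite_graphs_states: "finite (graphs n m \<times> Pow {..<n})"
  using finite_graphs by simp

lemma prob_dec_state_in_state:
  assumes "set_pmf \<Omega> \<subseteq> {..n}"
  shows "measure_pmf.prob (dec_state n m \<Omega> k) {s. in_state m u c r s} =
    (\<Sum>V\<in>Pow {..<n}. \<Sum>G\<in>graphs n m. pmf (graph_pmf n m \<Omega>) G *
      (if in_state m u c r (G, V) then pmf (peel n m G k) V else 0))"
proof -
  have "measure_pmf.prob (dec_state n m \<Omega> k) {s. in_state m u c r s} =
      (\<Sum>s\<in>graphs n m \<times> Pow {..<n}. pmf (dec_state n m \<Omega> k) s * indicator {s. in_state m u c r s} s)"
    by (rule measure_pmf_finite_support[OF finite_graphs_states set_dec_state[OF assms]])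
  also have "\<dots> = (\<Sum>G\<in>graphs n m. \<Sum>V\<in>Pow {..<n}. pmf (graph_pmf n m \<Omega>) G *
      (if in_state m u c r (G, V) then pmf (peel n m G k) V else 0))"
    unfolding sum.cartesian_product
    by (intro sum.cong refl) (auto simp: pmf_dec_state[OF assms])
  finally show ?thesis
    by (simp only: sum.swap[of _ "graphs n m"])
qed

lemma prob_dec_trans_in_state:
  assumes "set_pmf \<Omega> \<subseteq> {..n}"
  shows "measure_pmf.prob (dec_trans n m \<Omega> k) {(s, s'). in_state m u c r s \<and> in_state m u' c' r' s'} =
    (\<Sum>V\<in>Pow {..<n}. \<Sum>G\<in>graphs n m. pmf (graph_pmf n m \<Omega>) G *
      (if in_state m u c r (G, V) then pmf (peel n m G k) V
         * measure_pmf.prob (peel_step m G V) {V'. in_state m u' c' r' (G, V')} else 0))"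
proof -
  let ?E = "{(s, s'). in_state m u c r s \<and> in_state m u' c' r' s'}"
  have step: "measure_pmf.prob (map_pmf (Pair (G, V)) (dec_step m (G, V))) ?E =
      (if in_state m u c r (G, V) then measure_pmf.prob (peel_step m G V) {V'. in_state m u' c' r' (G, V')} else 0)"
    for G V
  proof -
    have "(\<lambda>V'. ((G, V), (G, V'))) -` ?E = (if in_state m u c r (G, V) then {V'. in_state m u' c' r' (G, V')} else {})"
      by auto
    then show ?thesis
      by (simp add: dec_step_eq_peel_step map_pmf_comp)
  qed
  have "measure_pmf.prob (dec_trans n m \<Omega> k) ?E =
      (\<Sum>s\<in>graphs n m \<times> Pow {..<n}. pmf (dec_state n m \<Omega> k) s
        * measure_pmf.prob (map_pmf (Pair s) (dec_step m s)) ?E)"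
    unfolding dec_trans_def
    by (rule measure_bind_pmf_finite_support[OF finite_graphs_states set_dec_state[OF assms]])
  also have "\<dots> = (\<Sum>G\<in>graphs n m. \<Sum>V\<in>Pow {..<n}. pmf (graph_pmf n m \<Omega>) G *
      (if in_state m u c r (G, V) then pmf (peel n m G k) V
         * measure_pmf.prob (peel_step m G V) {V'. in_state m u' c' r' (G, V')} else 0))"
    unfolding sum.cartesian_product
  proof (intro sum.cong refl)
    fix s assume "s \<in> graphs n m \<times> Pow {..<n}"
    then obtain G V where s: "s = (G, V)" by blast
    show "pmf (dec_state n m \<Omega> k) s * measure_pmf.prob (map_pmf (Pair s) (dec_step m s)) ?E =
        (case s of (G, V) \<Rightarrow> pmf (graph_pmf n m \<Omega>) G *
          (if in_state m u c r (G, V) then pmf (peel n m G k) V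
             * measure_pmf.prob (peel_step m G V) {V'. in_state m u' c' r' (G, V')} else 0))"
      unfolding s step pmf_dec_state[OF assms] by simp
  qed
  finally show ?thesis
    by (simp only: sum.swap[of _ "graphs n m"])
qed

theorem theorem1:
  fixes n m u c r a b :: nat and \<Omega> :: "nat pmf"
  assumes deg: "set_pmf \<Omega> \<subseteq> {..n}"
    and u: "1 \<le> u" "u \<le> n"
    and r: "r > 0"
    and pos: "measure_pmf.prob (dec_state n m \<Omega> (n - u)) {s. in_state m u c r s} > 0"
    and ab: "b \<le> c" "1 \<le> a" "a \<le> r + b"
  shows "measure_pmf.prob (dec_trans n m \<Omega> (n - u))
             {(s, s'). in_state m u c r s \<and> in_state m (u - 1) (c - b) (r + b - a) s'}
         / measure_pmf.prob (dec_state n m \<Omega> (n - u)) {s. in_state m u c r s}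
       = real (c choose b) * q_u n \<Omega> u ^ b * (1 - q_u n \<Omega> u) ^ (c - b)
         * real ((r - 1) choose (a - 1)) * (1 / real u) ^ (a - 1) * (1 - 1 / real u) ^ (r - a)"
proof -
  have "measure_pmf.prob (dec_trans n m \<Omega> (n - u))
      {(s, s'). in_state m u c r s \<and> in_state m (u - 1) (c - b) (r + b - a) s'} =
    trans_prob n \<Omega> u c r a b * measure_pmf.prob (dec_state n m \<Omega> (n - u)) {s. in_state m u c r s}"
    unfolding prob_dec_trans_in_state[OF deg] prob_dec_state_in_state[OF deg]
      sum_distrib_left[where A = "Pow {..<n}"]
    by (intro sum.cong refl sum_graph_in_state_peel[OF _ u(1) deg r ab]) simp
  with pos show ?thesis
    by (simp add: trans_prob_def)
qed

end
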